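(* There exists a strictly decreasing function $\delta:[0,\tau_D]\to(0,1]$ with $\delta(0)=1$, depending only on $n,a^*,b_*$, such that the following holds. For any trajectory of system (5), any $t_0\ge0$, and any $i\in\mathcal V_F$, $j\in\mathcal V_L$ such that the arc $(j,i)$ belongs to $\mathcal E_{\sigma(t)}$ for all $t\in[t_0,t_0+\tau_D)$, $$|x_i(t)|_{\mathcal L(y(t))}\le\delta(t-t_0)\,|x(t_0)|_{\mathcal L(y(t_0))}+2\sqrt2\int_{t_0}^{t_0+\tau_D}|z(s)|\,ds\quad\text{for all }t\in[t_0,t_0+\tau_D].$$
   Context: Standing setup. Fix integers $n\ge 2$, $k\ge 1$, $d\ge 1$. The follower set is $\mathcal V_F=\{1,\dots,n\}$ and the leader set is $\mathcal V_L=\{\hat 1,\dots,\hat k\}$ (disjoint from $\mathcal V_F$); $\mathcal V=\mathcal V_F\cup\mathcal V_L$. The interaction topology is a time-varying digraph $\mathcal G_{\sigma(t)}=(\mathcal V,\mathcal E_{\sigma(t)})$, where $\sigma:[0,\infty)\to\mathcal P$ is a piecewise constant switching signal taking values in a finite set $\mathcal P$ of digraphs on $\mathcal V$; no arc of any of these digraphs enters a leader. An arc $(j,i)$ means that $i$ receives information from $j$. Dwell-time assumption: any two consecutive switching instants of $\sigma$ are separated by at least $\tau_D>0$. For $i\in\mathcal V_F$, $N_i(\sigma(t))=\{j\in\mathcal V_F:(j,i)\in\mathcal E_{\sigma(t)}\}$ and $L_i(\sigma(t))=\{j\in\mathcal V_L:(j,i)\in\mathcal E_{\sigma(t)}\}$.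 System (5): $\dot y_i=u_i(y,t)$ for $i=1,\dots,k$, and $\dot x_i=\sum_{j\in N_i(\sigma(t))}a_{ij}(x,y,t)(x_j-x_i)+\sum_{j\in L_i(\sigma(t))}b_{ij}(x,y,t)(y_j-x_i)+w_i(t)$ for $i=1,\dots,n$, where $x_i,y_j\in\mathbb R^d$, $x=(x_1,\dots,x_n)$, $y=(y_1,\dots,y_k)$; each $u_i(y,t)$ is continuous in $y$ and piecewise continuous in $t$; each $w_i$ is continuous; the weights $a_{ij},b_{ij}$ are continuous and satisfy $a_*\le a_{ij}(x,y,t)\le a^*$, $b_{ij}(x,y,t)\ge b_*$ for all $x,y,t$, with constants $0<a_*\le a^*$, $b_*>0$. Along a trajectory, $z(t)=(u_1(y(t),t),\dots,u_k(y(t),t),w_1(t),\dots,w_n(t))\in\mathbb R^{(n+k)d}$. Set notation: $|\cdot|$ is the Euclidean norm; for a closed convex $K\subset\mathbb R^d$, $|v|_K=\inf_{p\in K}|v-p|$; $\mathcal L(y(t))=\mathrm{co}\{y_1(t),\dots,y_k(t)\}$ (convex hull); $|x(t)|_{\mathcal L(y(t))}=\max_{i\in\mathcal V_F}|x_i(t)|_{\mathcal L(y(t))}$. *)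

theory Defs
  imports "HOL-Analysis.Analysis"
begin

text \<open>Points of R^d are represented as functions nat => real, of which only the
components 0..<d are relevant (d varies inside the statement, so it cannot be a type).
Followers are Inl 1..Inl n, leaders are Inr 1..Inr k.\<close>

type_synonym pt = "nat \<Rightarrow> real"
type_synonym vtx = "nat + nat"
type_synonym digraph = "(vtx \<times> vtx) set"

definition enorm :: "nat \<Rightarrow> pt \<Rightarrow> real" where
  "enorm d v = sqrt (\<Sum>l<d. (v l)\<^sup>2)"

definition leader_hull :: "nat \<Rightarrow> nat \<Rightarrow> (nat \<Rightarrow> pt) \<Rightarrow> pt set" where
  "leader_hull d k ys = {p. \<exists>c. (\<forall>j\<in>{1..k}. 0 \<le> c j) \<and> (\<Sum>j=1..k. c j) = 1 \<and>
                              (\<forall>l<d. p l = (\<Sum>j=1..k. c j * ys j l))}"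

definition setdist_pt :: "nat \<Rightarrow> pt set \<Rightarrow> pt \<Rightarrow> real" where
  "setdist_pt d K v = Inf {enorm d (\<lambda>l. v l - p l) | p. p \<in> K}"

text \<open>|x|_{L(y)} = max over followers\<close>
definition max_dist :: "nat \<Rightarrow> nat \<Rightarrow> nat \<Rightarrow> (nat \<Rightarrow> pt) \<Rightarrow> (nat \<Rightarrow> pt) \<Rightarrow> real" where
  "max_dist d n k xs ys = (MAX i\<in>{1..n}. setdist_pt d (leader_hull d k ys) (xs i))"

definition admissible_graph :: "nat \<Rightarrow> nat \<Rightarrow> digraph \<Rightarrow> bool" where
  "admissible_graph n k E \<longleftrightarrow>
     E \<subseteq> (Inl ` {1..n} \<union> Inr ` {1..k}) \<times> (Inl ` {1..n} \<union> Inr ` {1..k}) \<and>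
     (\<forall>(p, q)\<in>E. q \<notin> Inr ` {1..k})"

text \<open>piecewise constant switching signal with values in P and dwell time tauD;
  S is the set of switching instants, sigma is right-continuous\<close>
definition dwell_switching :: "real \<Rightarrow> digraph set \<Rightarrow> (real \<Rightarrow> digraph) \<Rightarrow> bool" where
  "dwell_switching tauD P \<sigma> \<longleftrightarrow>
     (\<forall>t\<ge>0. \<sigma> t \<in> P) \<and>
     (\<exists>S. S \<subseteq> {0<..} \<and> (\<forall>s\<in>S. \<forall>s'\<in>S. s \<noteq> s' \<longrightarrow> \<bar>s - s'\<bar> \<ge> tauD) \<and>
          (\<forall>a b. 0 \<le> a \<longrightarrow> a < b \<longrightarrow> {a<..<b} \<inter> S = {} \<longrightarrow> (\<forall>t\<in>{a..<b}. \<sigma> t = \<sigma> a)))"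

definition Nset :: "nat \<Rightarrow> digraph \<Rightarrow> nat \<Rightarrow> nat set" where
  "Nset n E i = {j\<in>{1..n}. (Inl j, Inl i) \<in> E}"

definition Lset :: "nat \<Rightarrow> digraph \<Rightarrow> nat \<Rightarrow> nat set" where
  "Lset k E i = {j\<in>{1..k}. (Inr j, Inl i) \<in> E}"

definition weight_cont :: "nat \<Rightarrow> nat \<Rightarrow> nat \<Rightarrow> ((nat \<Rightarrow> pt) \<Rightarrow> (nat \<Rightarrow> pt) \<Rightarrow> real \<Rightarrow> real) \<Rightarrow> bool" where
  "weight_cont d n k f \<longleftrightarrow>
     (\<forall>X Y T x y t.
        (\<forall>i\<in>{1..n}. \<forall>l<d. (\<lambda>m. X m i l) \<longlonglongrightarrow> x i l) \<and>
        (\<forall>j\<in>{1..k}. \<forall>l<d. (\<lambda>m. Y m j l) \<longlonglongrightarrow> y j l) \<and> T \<longlonglongrightarrow> t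
        \<longrightarrow> (\<lambda>m. f (X m) (Y m) (T m)) \<longlonglongrightarrow> f x y t)"

definition input_cont_y :: "nat \<Rightarrow> nat \<Rightarrow> ((nat \<Rightarrow> pt) \<Rightarrow> pt) \<Rightarrow> bool" where
  "input_cont_y d k g \<longleftrightarrow>
     (\<forall>Y y. (\<forall>j\<in>{1..k}. \<forall>l<d. (\<lambda>m. Y m j l) \<longlonglongrightarrow> y j l)
        \<longrightarrow> (\<forall>l<d. (\<lambda>m. g (Y m) l) \<longlonglongrightarrow> g y l))"

definition pw_cont :: "nat \<Rightarrow> (real \<Rightarrow> pt) \<Rightarrow> bool" where
  "pw_cont d g \<longleftrightarrow>
     (\<forall>T\<ge>0. \<exists>F. finite F \<and>
        (\<forall>t\<in>{0..T} - F. \<forall>l<d. continuous (at t within {0..}) (\<lambda>s. g s l)) \<and>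
        (\<forall>t\<in>F. \<forall>l<d. (\<exists>L. ((\<lambda>s. g s l) \<longlongrightarrow> L) (at_left t)) \<and>
                      (\<exists>R. ((\<lambda>s. g s l) \<longlongrightarrow> R) (at_right t))))"

definition follower_rhs ::
  "nat \<Rightarrow> nat \<Rightarrow> (real \<Rightarrow> digraph)
   \<Rightarrow> (nat \<Rightarrow> nat \<Rightarrow> (nat \<Rightarrow> pt) \<Rightarrow> (nat \<Rightarrow> pt) \<Rightarrow> real \<Rightarrow> real)
   \<Rightarrow> (nat \<Rightarrow> nat \<Rightarrow> (nat \<Rightarrow> pt) \<Rightarrow> (nat \<Rightarrow> pt) \<Rightarrow> real \<Rightarrow> real)
   \<Rightarrow> (nat \<Rightarrow> real \<Rightarrow> pt) \<Rightarrow> (real \<Rightarrow> nat \<Rightarrow> pt) \<Rightarrow> (real \<Rightarrow> nat \<Rightarrow> pt)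
   \<Rightarrow> real \<Rightarrow> nat \<Rightarrow> pt" where
  "follower_rhs n k \<sigma> a b w x y t i = (\<lambda>l.
      (\<Sum>j\<in>Nset n (\<sigma> t) i. a i j (x t) (y t) t * (x t j l - x t i l))
    + (\<Sum>j\<in>Lset k (\<sigma> t) i. b i j (x t) (y t) t * (y t j l - x t i l))
    + w i t l)"

text \<open>(Caratheodory) trajectory of system (5) on [0,oo): absolutely continuous, i.e.
  the state is the integral of the (locally absolutely integrable) right-hand side\<close>
definition trajectory ::
  "nat \<Rightarrow> nat \<Rightarrow> nat \<Rightarrow> (real \<Rightarrow> digraph)
   \<Rightarrow> (nat \<Rightarrow> nat \<Rightarrow> (nat \<Rightarrow> pt) \<Rightarrow> (nat \<Rightarrow> pt) \<Rightarrow> real \<Rightarrow> real)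
   \<Rightarrow> (nat \<Rightarrow> nat \<Rightarrow> (nat \<Rightarrow> pt) \<Rightarrow> (nat \<Rightarrow> pt) \<Rightarrow> real \<Rightarrow> real)
   \<Rightarrow> (nat \<Rightarrow> (nat \<Rightarrow> pt) \<Rightarrow> real \<Rightarrow> pt) \<Rightarrow> (nat \<Rightarrow> real \<Rightarrow> pt)
   \<Rightarrow> (real \<Rightarrow> nat \<Rightarrow> pt) \<Rightarrow> (real \<Rightarrow> nat \<Rightarrow> pt) \<Rightarrow> bool" where
  "trajectory d n k \<sigma> a b u w x y \<longleftrightarrow>
     (\<forall>t\<ge>0. \<forall>i\<in>{1..k}. \<forall>l<d.
        (\<lambda>s. u i (y s) s l) absolutely_integrable_on {0..t} \<and>
        ((\<lambda>s. u i (y s) s l) has_integral (y t i l - y 0 i l)) {0..t}) \<and>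
     (\<forall>t\<ge>0. \<forall>i\<in>{1..n}. \<forall>l<d.
        (\<lambda>s. follower_rhs n k \<sigma> a b w x y s i l) absolutely_integrable_on {0..t} \<and>
        ((\<lambda>s. follower_rhs n k \<sigma> a b w x y s i l) has_integral (x t i l - x 0 i l)) {0..t})"

text \<open>|z(t)|, the Euclidean norm in R^{(n+k)d}\<close>
definition znorm :: "nat \<Rightarrow> nat \<Rightarrow> nat \<Rightarrow> (nat \<Rightarrow> (nat \<Rightarrow> pt) \<Rightarrow> real \<Rightarrow> pt)
   \<Rightarrow> (nat \<Rightarrow> real \<Rightarrow> pt) \<Rightarrow> (real \<Rightarrow> nat \<Rightarrow> pt) \<Rightarrow> real \<Rightarrow> real" where
  "znorm d n k u w y t =
     sqrt ((\<Sum>i\<in>{1..k}. \<Sum>l<d. (u i (y t) t l)\<^sup>2) + (\<Sum>i\<in>{1..n}. \<Sum>l<d. (w i t l)\<^sup>2))"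

end

theory Submission
  imports Defs
begin

(* Write K(t) = co{y_1(t),...,y_k(t)}, f_i(t) = |x_i(t)|_K(t) and M(t) = max_i f_i(t).
   Over a short time step [t, t+h] the switching signal is constant and the state barely
   moves, so integrating system (5) shows that x_i(t+h) is, up to the input contribution
   and an error o(h), the convex combination
     (1 - A - B) x_i(t) + sum_j alpha_j x_j(t) + sum_j beta_j y_j(t)
   with A = sum alpha_j <= n a_up h, and B = sum beta_j >= b_low h when leader j feeds i.
   Since the distance to a convex set is convex and vanishes at the leaders, this gives the
   one-step estimate  f_i(t+h) <= (1-A-B) f_i(t) + A M(t) + sqrt 2 int_t^{t+h} |z| + o(h).
   A comparison principle for right Dini derivatives then yields
   (1) M(t) <= M(t0) + sqrt 2 int |z|, and (2) on an interval where the arc (j,i) is present,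
   f_i(t) <= (1 - kappa (t - t0)) (M(t0) + sqrt 2 int |z|) + sqrt 2 int |z|
   with kappa = b_low / (1 + (b_low + n a_up) tauD); hence delta(s) = 1 - kappa s. *)

section \<open>The Euclidean norm of the first d coordinates\<close>

lemma enorm_eq_L2_set: "enorm d v = L2_set v {..<d}"
  by (simp add: enorm_def L2_set_def)

lemma enorm_cong: "(\<And>l. l < d \<Longrightarrow> u l = v l) \<Longrightarrow> enorm d u = enorm d v"
  unfolding enorm_def by (intro arg_cong[where f=sqrt] sum.cong) auto

lemma enorm_nonneg: "0 \<le> enorm d v"
  by (simp add: enorm_def sum_nonneg)

lemma enorm_zero: "enorm d (\<lambda>l. 0) = 0"
  by (simp add: enorm_def)

lemma enorm_triangle: "enorm d (\<lambda>l. u l + v l) \<le> enorm d u + enorm d v"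
  unfolding enorm_eq_L2_set by (rule L2_set_triangle_ineq)

lemma enorm_scale: "enorm d (\<lambda>l. c * v l) = \<bar>c\<bar> * enorm d v"
  by (simp add: enorm_def power_mult_distrib sum_distrib_left[symmetric] real_sqrt_mult)

lemma enorm_diff_commute: "enorm d (\<lambda>l. u l - v l) = enorm d (\<lambda>l. v l - u l)"
  unfolding enorm_def by (simp add: power2_commute)

lemma enorm_le_sum_abs: "enorm d v \<le> (\<Sum>l<d. \<bar>v l\<bar>)"
  unfolding enorm_eq_L2_set by (rule L2_set_le_sum_abs)

lemma enorm_sum:
  assumes "finite I"
  shows "enorm d (\<lambda>l. \<Sum>m\<in>I. g m l) \<le> (\<Sum>m\<in>I. enorm d (g m))"
  using assms
proof (induction I rule: finite_induct)
  case empty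
  then show ?case by (simp add: enorm_zero)
next
  case (insert m I)
  have "enorm d (\<lambda>l. \<Sum>m\<in>insert m I. g m l) = enorm d (\<lambda>l. g m l + (\<Sum>m\<in>I. g m l))"
    using insert by simp
  also have "\<dots> \<le> enorm d (g m) + enorm d (\<lambda>l. \<Sum>m\<in>I. g m l)"
    using enorm_triangle[of d "g m"] by simp
  also have "\<dots> \<le> enorm d (g m) + (\<Sum>m\<in>I. enorm d (g m))" using insert by simp
  finally show ?case using insert by simp
qed

text \<open>Cauchy--Schwarz, and the fact that the norm is attained as an inner product with a
  vector of norm at most one; the latter lets us move the norm inside an integral.\<close>

lemma enorm_inner_le: "(\<Sum>l<d. u l * v l) \<le> enorm d u * enorm d v"
proof -
  have "(\<Sum>l<d. u l * v l) \<le> (\<Sum>l<d. \<bar>u l\<bar> * \<bar>v l\<bar>)"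
    by (intro sum_mono) (metis abs_ge_self abs_mult)
  also have "\<dots> \<le> enorm d u * enorm d v" unfolding enorm_eq_L2_set by (rule L2_set_mult_ineq)
  finally show ?thesis .
qed

lemma enorm_as_inner: "\<exists>c. 0 \<le> c \<and> c * enorm d v \<le> 1 \<and> enorm d v = (\<Sum>l<d. (c * v l) * v l)"
proof (cases "enorm d v = 0")
  case True then show ?thesis by (intro exI[of _ 0]) auto
next
  case False
  have "(\<Sum>l<d. (1 / enorm d v * v l) * v l) = 1 / enorm d v * (\<Sum>l<d. v l * v l)"
    by (simp add: sum_distrib_left mult.assoc)
  also have "(\<Sum>l<d. v l * v l) = (enorm d v)\<^sup>2"
    by (simp add: enorm_def sum_nonneg power2_eq_square)
  also have "1 / enorm d v * (enorm d v)\<^sup>2 = enorm d v"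
    using False by (simp add: power2_eq_square)
  finally have "(\<Sum>l<d. (1 / enorm d v * v l) * v l) = enorm d v" .
  then show ?thesis using False enorm_nonneg[of d v] by (intro exI[of _ "1 / enorm d v"]) auto
qed

lemma continuous_enorm_diff:
  assumes "\<And>l. l < d \<Longrightarrow> continuous (at s within S) (\<lambda>r. X r l)"
  shows "continuous (at s within S) (\<lambda>r. enorm d (\<lambda>l. X r l - X s l))"
proof -
  have "continuous (at s within S) (\<lambda>r. \<Sum>l<d. (X r l - X s l)\<^sup>2)"
    by (intro continuous_sum continuous_power continuous_diff assms continuous_const) auto
  then show ?thesis unfolding enorm_def
    by (rule continuous_within_compose2[OF _ continuous_at_imp_continuous_within[OF isCont_real_sqrt]])
qed

section \<open>Distance to the convex hull of the leaders\<close>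

lemma leader_hull_vertex: "j \<in> {1..k} \<Longrightarrow> Y j \<in> leader_hull d k Y"
proof -
  assume j: "j \<in> {1..k}"
  have "\<And>l. (\<Sum>j'=1..k. (if j' = j then 1 else 0) * Y j' l) = Y j l"
    using j by (simp add: if_distrib[of "\<lambda>z. z * _"] sum.delta cong: if_cong)
  moreover have "(\<Sum>j'=1..k. (if j' = j then 1 else (0::real))) = 1"
    using j by (simp add: sum.delta)
  ultimately show ?thesis unfolding leader_hull_def
    by (intro CollectI exI[of _ "\<lambda>j'. if j' = j then 1 else 0"]) auto
qed

lemma leader_hull_nonempty: "1 \<le> k \<Longrightarrow> leader_hull d k Y \<noteq> {}"
  using leader_hull_vertex[of 1 k Y d] by auto

lemma leader_hull_convex:
  assumes "finite I" "\<And>m. m \<in> I \<Longrightarrow> 0 \<le> \<theta> m" "(\<Sum>m\<in>I. \<theta> m) = 1"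
    "\<And>m. m \<in> I \<Longrightarrow> P m \<in> leader_hull d k Y"
  shows "(\<lambda>l. \<Sum>m\<in>I. \<theta> m * P m l) \<in> leader_hull d k Y"
proof -
  have "\<forall>m\<in>I. \<exists>c. (\<forall>j\<in>{1..k}. 0 \<le> c j) \<and> (\<Sum>j=1..k. c j) = 1 \<and>
                              (\<forall>l<d. P m l = (\<Sum>j=1..k. c j * Y j l))"
    using assms(4) unfolding leader_hull_def by blast
  then obtain C where C: "\<And>m. m\<in>I \<Longrightarrow> (\<forall>j\<in>{1..k}. 0 \<le> C m j) \<and> (\<Sum>j=1..k. C m j) = 1 \<and>
                              (\<forall>l<d. P m l = (\<Sum>j=1..k. C m j * Y j l))"
    by metis
  define c where "c j = (\<Sum>m\<in>I. \<theta> m * C m j)" for j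
  have c_nonneg: "\<forall>j\<in>{1..k}. 0 \<le> c j" unfolding c_def using C assms(2)
    by (auto intro!: sum_nonneg)
  have "(\<Sum>j=1..k. c j) = (\<Sum>m\<in>I. \<theta> m * (\<Sum>j=1..k. C m j))"
    unfolding c_def by (simp add: sum_distrib_left) (rule sum.swap)
  also have "\<dots> = 1" using C assms(3) by simp
  finally have c_sum: "(\<Sum>j=1..k. c j) = 1" .
  have c_comb: "\<forall>l<d. (\<Sum>m\<in>I. \<theta> m * P m l) = (\<Sum>j=1..k. c j * Y j l)"
  proof (intro allI impI)
    fix l assume l: "l < d"
    have "(\<Sum>m\<in>I. \<theta> m * P m l) = (\<Sum>m\<in>I. \<theta> m * (\<Sum>j=1..k. C m j * Y j l))"
      using C l by (intro sum.cong) auto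
    also have "\<dots> = (\<Sum>j=1..k. c j * Y j l)"
      unfolding c_def by (simp add: sum_distrib_left sum_distrib_right mult.assoc) (rule sum.swap)
    finally show "(\<Sum>m\<in>I. \<theta> m * P m l) = (\<Sum>j=1..k. c j * Y j l)" .
  qed
  show ?thesis unfolding leader_hull_def using c_nonneg c_sum c_comb by blast
qed

lemma setdist_pt_bdd_below: "bdd_below {enorm d (\<lambda>l. v l - p l) | p. p \<in> K}"
  by (rule bdd_belowI[of _ 0]) (auto simp: enorm_nonneg)

lemma setdist_pt_nonneg: "K \<noteq> {} \<Longrightarrow> 0 \<le> setdist_pt d K v"
  unfolding setdist_pt_def by (rule cInf_greatest) (auto simp: enorm_nonneg)

lemma setdist_pt_le: "p \<in> K \<Longrightarrow> setdist_pt d K v \<le> enorm d (\<lambda>l. v l - p l)"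
  unfolding setdist_pt_def by (rule cInf_lower[OF _ setdist_pt_bdd_below]) auto

lemma setdist_pt_approx:
  assumes "K \<noteq> {}" "e > 0"
  shows "\<exists>p\<in>K. enorm d (\<lambda>l. v l - p l) < setdist_pt d K v + e"
proof -
  have ne: "{enorm d (\<lambda>l. v l - p l) | p. p \<in> K} \<noteq> {}" using assms by auto
  have "Inf {enorm d (\<lambda>l. v l - p l) | p. p \<in> K} < setdist_pt d K v + e"
    using assms unfolding setdist_pt_def by simp
  then obtain z where "z \<in> {enorm d (\<lambda>l. v l - p l) | p. p \<in> K}" "z < setdist_pt d K v + e"
    using cInf_less_iff[OF ne setdist_pt_bdd_below] by blast
  then show ?thesis by auto
qed

lemma setdist_pt_member: "p \<in> K \<Longrightarrow> setdist_pt d K p = 0"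
  using setdist_pt_le[of p K d p] setdist_pt_nonneg[of K d p] by (auto simp: enorm_zero)

lemma setdist_pt_lipschitz:
  assumes "K \<noteq> {}"
  shows "setdist_pt d K v \<le> setdist_pt d K v' + enorm d (\<lambda>l. v l - v' l)"
proof (rule field_le_epsilon)
  fix e :: real assume e: "0 < e"
  obtain p where p: "p \<in> K" "enorm d (\<lambda>l. v' l - p l) < setdist_pt d K v' + e"
    using setdist_pt_approx[OF assms e] by blast
  have "setdist_pt d K v \<le> enorm d (\<lambda>l. (v l - v' l) + (v' l - p l))"
    using setdist_pt_le[OF p(1)] by simp
  also have "\<dots> \<le> enorm d (\<lambda>l. v l - v' l) + enorm d (\<lambda>l. v' l - p l)" by (rule enorm_triangle)
  finally show "setdist_pt d K v \<le> setdist_pt d K v' + enorm d (\<lambda>l. v l - v' l) + e"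
    using p(2) by simp
qed

lemma setdist_pt_convex:
  assumes k: "1 \<le> k" and I: "finite I" "\<And>m. m \<in> I \<Longrightarrow> 0 \<le> \<theta> m" "(\<Sum>m\<in>I. \<theta> m) = 1"
    and v: "\<And>l. l < d \<Longrightarrow> v l = (\<Sum>m\<in>I. \<theta> m * q m l)"
  shows "setdist_pt d (leader_hull d k Y) v
    \<le> (\<Sum>m\<in>I. \<theta> m * setdist_pt d (leader_hull d k Y) (q m))"
proof (rule field_le_epsilon)
  fix e :: real assume e: "0 < e"
  let ?K = "leader_hull d k Y"
  have "\<forall>m\<in>I. \<exists>p\<in>?K. enorm d (\<lambda>l. q m l - p l) < setdist_pt d ?K (q m) + e"
    using setdist_pt_approx[OF leader_hull_nonempty[OF k] e] by blast
  then obtain p where p: "\<And>m. m\<in>I \<Longrightarrow> p m \<in> ?K \<and>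
      enorm d (\<lambda>l. q m l - p m l) < setdist_pt d ?K (q m) + e"
    by metis
  have P: "(\<lambda>l. \<Sum>m\<in>I. \<theta> m * p m l) \<in> ?K"
    by (rule leader_hull_convex[OF I]) (use p in auto)
  have "setdist_pt d ?K v \<le> enorm d (\<lambda>l. v l - (\<Sum>m\<in>I. \<theta> m * p m l))"
    by (rule setdist_pt_le[OF P])
  also have "\<dots> = enorm d (\<lambda>l. \<Sum>m\<in>I. \<theta> m * (q m l - p m l))"
    by (rule enorm_cong) (simp add: v right_diff_distrib sum_subtractf)
  also have "\<dots> \<le> (\<Sum>m\<in>I. enorm d (\<lambda>l. \<theta> m * (q m l - p m l)))"
    by (rule enorm_sum[OF I(1)])
  also have "\<dots> = (\<Sum>m\<in>I. \<theta> m * enorm d (\<lambda>l. q m l - p m l))"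
    using I(2) by (intro sum.cong) (auto simp: enorm_scale)
  also have "\<dots> \<le> (\<Sum>m\<in>I. \<theta> m * (setdist_pt d ?K (q m) + e))"
    using I(2) p by (intro sum_mono mult_left_mono) (auto intro: less_imp_le)
  also have "\<dots> = (\<Sum>m\<in>I. \<theta> m * setdist_pt d ?K (q m)) + e"
    using I(3) by (simp add: distrib_left sum.distrib sum_distrib_right[symmetric])
  finally show "setdist_pt d ?K v \<le> (\<Sum>m\<in>I. \<theta> m * setdist_pt d ?K (q m)) + e" .
qed

lemma setdist_pt_hull_shift:
  assumes k: "1 \<le> k" and D: "\<And>j. j \<in> {1..k} \<Longrightarrow> enorm d (\<lambda>l. Y' j l - Y j l) \<le> D"
  shows "setdist_pt d (leader_hull d k Y') v \<le> setdist_pt d (leader_hull d k Y) v + D"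
proof (rule field_le_epsilon)
  fix e :: real assume e: "0 < e"
  obtain p where p: "p \<in> leader_hull d k Y"
    "enorm d (\<lambda>l. v l - p l) < setdist_pt d (leader_hull d k Y) v + e"
    using setdist_pt_approx[OF leader_hull_nonempty[OF k] e] by blast
  then obtain c where c: "\<forall>j\<in>{1..k}. 0 \<le> c j" "(\<Sum>j=1..k. c j) = 1"
    "\<forall>l<d. p l = (\<Sum>j=1..k. c j * Y j l)"
    unfolding leader_hull_def by blast
  define p' where "p' l = (\<Sum>j=1..k. c j * Y' j l)" for l
  have p': "p' \<in> leader_hull d k Y'" unfolding leader_hull_def p'_def using c by blast
  have "setdist_pt d (leader_hull d k Y') v \<le> enorm d (\<lambda>l. v l - p' l)"
    by (rule setdist_pt_le[OF p'])
  also have "\<dots> = enorm d (\<lambda>l. (v l - p l) + (\<Sum>j=1..k. c j * (Y j l - Y' j l)))"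
    by (rule enorm_cong) (simp add: c p'_def right_diff_distrib sum_subtractf)
  also have "\<dots> \<le> enorm d (\<lambda>l. v l - p l) + enorm d (\<lambda>l. \<Sum>j=1..k. c j * (Y j l - Y' j l))"
    by (rule enorm_triangle)
  also have "enorm d (\<lambda>l. \<Sum>j=1..k. c j * (Y j l - Y' j l))
      \<le> (\<Sum>j=1..k. enorm d (\<lambda>l. c j * (Y j l - Y' j l)))"
    by (rule enorm_sum) simp
  also have "\<dots> = (\<Sum>j=1..k. c j * enorm d (\<lambda>l. Y' j l - Y j l))"
    using c(1) by (intro sum.cong refl) (simp add: enorm_scale enorm_diff_commute[of d "Y _"])
  also have "\<dots> \<le> (\<Sum>j=1..k. c j * D)"
    using c(1) D by (intro sum_mono mult_left_mono) auto
  also have "\<dots> = D" using c(2) by (simp add: sum_distrib_right[symmetric])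
  finally show "setdist_pt d (leader_hull d k Y') v \<le> setdist_pt d (leader_hull d k Y) v + D + e"
    using p(2) by simp
qed

lemma sum_self_followers_leaders:
  assumes "finite N" "finite L"
  shows "(\<Sum>m\<in>insert None (Some ` (Inl ` N \<union> Inr ` L)). g m)
       = g None + (\<Sum>j\<in>N. g (Some (Inl j))) + (\<Sum>j\<in>L. g (Some (Inr j)))"
proof -
  have "(\<Sum>m\<in>insert None (Some ` (Inl ` N \<union> Inr ` L)). g m)
      = g None + (\<Sum>m\<in>Inl ` N \<union> Inr ` L. g (Some m))"
    using assms by (subst sum.insert) (auto simp: sum.reindex)
  also have "(\<Sum>m\<in>Inl ` N \<union> Inr ` L. g (Some m))
      = (\<Sum>j\<in>N. g (Some (Inl j))) + (\<Sum>j\<in>L. g (Some (Inr j)))"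
    using assms by (subst sum.union_disjoint) (auto simp: sum.reindex)
  finally show ?thesis by (simp add: add.assoc)
qed

text \<open>The geometric core of the one-step estimate: a convex combination of follower i,
  other followers and leaders is no farther from the hull than the same combination of
  the followers' distances (leaders contribute distance zero).\<close>

lemma setdist_follower_leader_combination:
  fixes X Y :: "nat \<Rightarrow> pt" and \<alpha> \<beta> :: "nat \<Rightarrow> real" and N L :: "nat set"
  defines "A \<equiv> \<Sum>j\<in>N. \<alpha> j" and "B \<equiv> \<Sum>j\<in>L. \<beta> j"
  assumes k: "1 \<le> k" and N: "finite N" and L: "L \<subseteq> {1..k}"
    and \<alpha>: "\<And>j. j \<in> N \<Longrightarrow> 0 \<le> \<alpha> j" and \<beta>: "\<And>j. j \<in> L \<Longrightarrow> 0 \<le> \<beta> j" and AB: "A + B \<le> 1"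
    and V: "\<And>l. l < d \<Longrightarrow>
      V l = (1 - A - B) * X i l + (\<Sum>j\<in>N. \<alpha> j * X j l) + (\<Sum>j\<in>L. \<beta> j * Y j l)"
  shows "setdist_pt d (leader_hull d k Y) V
    \<le> (1 - A - B) * setdist_pt d (leader_hull d k Y) (X i)
      + (\<Sum>j\<in>N. \<alpha> j * setdist_pt d (leader_hull d k Y) (X j))"
proof -
  let ?K = "leader_hull d k Y"
  have Lf: "finite L" using L finite_subset by blast
  define I :: "(nat + nat) option set" where "I = insert None (Some ` (Inl ` N \<union> Inr ` L))"
  define \<theta> where "\<theta> m = (case m of None \<Rightarrow> 1 - A - B | Some (Inl j) \<Rightarrow> \<alpha> j
    | Some (Inr j) \<Rightarrow> \<beta> j)" for m :: "(nat + nat) option"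
  define q where "q m = (case m of None \<Rightarrow> X i | Some (Inl j) \<Rightarrow> X j | Some (Inr j) \<Rightarrow> Y j)"
    for m :: "(nat + nat) option"
  have "setdist_pt d ?K V \<le> (\<Sum>m\<in>I. \<theta> m * setdist_pt d ?K (q m))"
  proof (rule setdist_pt_convex[OF k])
    show "finite I" unfolding I_def using N Lf by simp
    show "0 \<le> \<theta> m" if "m \<in> I" for m
      using that AB \<alpha> \<beta> unfolding I_def \<theta>_def by auto
    show "(\<Sum>m\<in>I. \<theta> m) = 1"
      unfolding I_def sum_self_followers_leaders[OF N Lf] by (simp add: \<theta>_def A_def B_def)
    show "V l = (\<Sum>m\<in>I. \<theta> m * q m l)" if "l < d" for l
      unfolding I_def sum_self_followers_leaders[OF N Lf] V[OF that] by (simp add: \<theta>_def q_def)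
  qed
  also have "\<dots> = (1 - A - B) * setdist_pt d ?K (X i) + (\<Sum>j\<in>N. \<alpha> j * setdist_pt d ?K (X j))"
    using L unfolding I_def sum_self_followers_leaders[OF N Lf]
    by (auto simp: \<theta>_def q_def setdist_pt_member leader_hull_vertex intro!: sum.neutral)
  finally show ?thesis .
qed

section \<open>A comparison principle for right Dini derivatives\<close>

lemma interval_closed_induction:
  fixes a b :: real and T :: "real set"
  assumes ab: "a \<le> b" and clT: "closed T" and aT: "a \<in> T"
    and step: "\<And>s. s \<in> {a..<b} \<Longrightarrow> {a..s} \<subseteq> T \<Longrightarrow> \<exists>s'\<in>{s<..b}. {s..s'} \<subseteq> T"
  shows "{a..b} \<subseteq> T"
proof -
  define S where "S = {s \<in> {a..b}. {a..s} \<subseteq> T}"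
  have aS: "a \<in> S" using ab aT unfolding S_def by auto
  have bdd: "bdd_above S" unfolding S_def by (rule bdd_aboveI[of _ b]) auto
  define s where "s = Sup S"
  have as: "a \<le> s" unfolding s_def using aS bdd by (rule cSup_upper)
  have sb: "s \<le> b" unfolding s_def using aS by (intro cSup_least) (auto simp: S_def)
  have "{a..<s} \<subseteq> T"
  proof
    fix r assume r: "r \<in> {a..<s}"
    then obtain s' where "s' \<in> S" "r < s'" using less_cSupD[of S r] aS unfolding s_def by auto
    then show "r \<in> T" using r unfolding S_def by auto
  qed
  then have upto_s: "{a..s} \<subseteq> T"
  proof (cases "a = s")
    case True then show ?thesis using aT by simp
  next
    case False
    then have "closure {a..<s} = {a..s}" using as by simp
    then show ?thesis using \<open>{a..<s} \<subseteq> T\<close> clT closure_minimal by metis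
  qed
  have "s = b"
  proof (rule ccontr)
    assume "s \<noteq> b"
    then obtain s' where s': "s' \<in> {s<..b}" "{s..s'} \<subseteq> T" using step[OF _ upto_s] as sb by auto
    moreover have "{a..s'} \<subseteq> {a..s} \<union> {s..s'}" by auto
    ultimately have "{a..s'} \<subseteq> T" using upto_s by blast
    then have "s' \<in> S" using s'(1) as unfolding S_def by auto
    then have "s' \<le> s" unfolding s_def using bdd by (rule cSup_upper)
    then show False using s' by simp
  qed
  then show ?thesis using upto_s by simp
qed

lemma right_dini_slack:
  fixes \<Phi> :: "real \<Rightarrow> real"
  assumes ab: "a \<le> b" and cont: "continuous_on {a..b} \<Phi>"
    and loc: "\<And>t e. t \<in> {a..<b} \<Longrightarrow> e > 0 \<Longrightarrow> \<forall>\<^sub>F h in at_right 0. \<Phi> (t+h) \<le> \<Phi> t + e*h"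
    and e: "e > 0"
  shows "\<Phi> b \<le> \<Phi> a + e * (b - a)"
proof -
  define T where "T = {r \<in> {a..b}. \<Phi> r \<le> \<Phi> a + e * (r - a)}"
  have "{a..b} \<subseteq> T"
  proof (rule interval_closed_induction[OF ab])
    show "closed T" unfolding T_def
      by (rule continuous_on_closed_Collect_le[OF cont]) (auto intro!: continuous_intros)
    show "a \<in> T" using ab unfolding T_def by auto
    fix s assume s: "s \<in> {a..<b}" and sT: "{a..s} \<subseteq> T"
    obtain \<eta> where \<eta>: "\<eta> > 0" "\<forall>h. 0 < h \<longrightarrow> h < \<eta> \<longrightarrow> \<Phi> (s+h) \<le> \<Phi> s + e*h"
      using loc[OF s e] unfolding eventually_at_right_field by auto
    define s' where "s' = s + min (\<eta>/2) ((b - s)/2)"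
    have s': "s < s'" "s' < s + \<eta>" "s' \<le> b" using \<eta> s unfolding s'_def by (auto simp: min_def field_simps)
    have rT: "r \<in> T" if r: "r \<in> {s..s'}" for r
    proof (cases "r = s")
      case True then show ?thesis using sT s by auto
    next
      case False
      then have "0 < r - s" "r - s < \<eta>" using r s' by auto
      then have "\<Phi> (s + (r - s)) \<le> \<Phi> s + e * (r - s)" using \<eta>(2) by blast
      moreover have "\<Phi> s \<le> \<Phi> a + e * (s - a)" using sT s unfolding T_def by auto
      moreover have "e * (s - a) + e * (r - s) = e * (r - a)" by (simp add: algebra_simps)
      ultimately have "\<Phi> r \<le> \<Phi> a + e * (r - a)" by simp
      then show ?thesis using r s s' unfolding T_def by simp
    qed
    show "\<exists>s'\<in>{s<..b}. {s..s'} \<subseteq> T" using s' rT by (intro bexI[of _ s'] subsetI) auto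
  qed
  then show ?thesis using ab unfolding T_def by auto
qed

lemma right_dini_nonincreasing:
  fixes \<Phi> :: "real \<Rightarrow> real"
  assumes ab: "a \<le> b" and cont: "continuous_on {a..b} \<Phi>"
    and loc: "\<And>t e. t \<in> {a..<b} \<Longrightarrow> e > 0 \<Longrightarrow> \<forall>\<^sub>F h in at_right 0. \<Phi> (t+h) \<le> \<Phi> t + e*h"
  shows "\<Phi> b \<le> \<Phi> a"
proof (rule field_le_epsilon)
  fix e :: real assume e: "0 < e"
  have e': "e / (b - a + 1) > 0" using e ab by simp
  have "\<Phi> b \<le> \<Phi> a + e / (b - a + 1) * (b - a)" by (rule right_dini_slack[OF ab cont loc e'])
  also have "e / (b - a + 1) * (b - a) \<le> e"
    using e ab by (simp add: field_simps)
  finally show "\<Phi> b \<le> \<Phi> a + e" by simp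
qed

text \<open>Variant used for invariance of a sublevel set: the Dini condition is only needed
  where Phi is nonnegative (apply the previous lemma to max Phi 0).\<close>

lemma right_dini_stays_nonpositive:
  fixes \<Phi> :: "real \<Rightarrow> real"
  assumes ab: "a \<le> b" and cont: "continuous_on {a..b} \<Phi>" and init: "\<Phi> a \<le> 0"
    and loc: "\<And>t e. t \<in> {a..<b} \<Longrightarrow> 0 \<le> \<Phi> t \<Longrightarrow> e > 0 \<Longrightarrow>
      \<forall>\<^sub>F h in at_right 0. \<Phi> (t+h) \<le> \<Phi> t + e*h"
  shows "\<Phi> b \<le> 0"
proof -
  let ?P = "\<lambda>t. max (\<Phi> t) 0"
  have "?P b \<le> ?P a"
  proof (rule right_dini_nonincreasing[OF ab])
    show "continuous_on {a..b} ?P" by (intro continuous_intros cont)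
    fix t e assume t: "t \<in> {a..<b}" and e: "(0::real) < e"
    show "\<forall>\<^sub>F h in at_right 0. ?P (t+h) \<le> ?P t + e*h"
    proof (cases "0 \<le> \<Phi> t")
      case True
      have "\<forall>\<^sub>F h in at_right (0::real). 0 < h" by (rule eventually_at_right_less)
      with loc[OF t True e] show ?thesis
        by eventually_elim (use True e in \<open>auto simp: max_def\<close>)
    next
      case False
      have "(\<Phi> \<longlongrightarrow> \<Phi> t) (at t within {a..b})"
        using cont t by (simp add: continuous_on_eq_continuous_within continuous_within)
      then have "\<forall>\<^sub>F r in at t within {a..b}. \<Phi> r < 0" using False by (intro order_tendstoD) auto
      then obtain \<delta> where \<delta>: "\<delta> > 0" "\<forall>r\<in>{a..b}. r \<noteq> t \<and> dist r t < \<delta> \<longrightarrow> \<Phi> r < 0"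
        unfolding eventually_at by auto
      show ?thesis unfolding eventually_at_right_field
      proof (intro exI[of _ "min \<delta> (b - t)"] conjI allI impI)
        show "0 < min \<delta> (b - t)" using \<delta> t by auto
        fix h assume h: "0 < h" "h < min \<delta> (b - t)"
        then have "\<Phi> (t+h) < 0" using \<delta>(2)[rule_format, of "t+h"] t by (auto simp: dist_real_def)
        then show "?P (t+h) \<le> ?P t + e*h" using h e by auto
      qed
    qed
  qed
  then show ?thesis using init by simp
qed

lemma integral_increment:
  fixes F X :: "real \<Rightarrow> real"
  assumes H: "\<And>t. 0 \<le> t \<Longrightarrow> (F has_integral (X t - X 0)) {0..t}"
    and t: "0 \<le> t" "t \<le> t'"
  shows "(F has_integral (X t' - X t)) {t..t'}"
proof -
  have i: "F integrable_on {0..t'}" using H[of t'] t by (auto intro: has_integral_integrable)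
  have sub: "F integrable_on {t..t'}" using t by (intro integrable_subinterval_real[OF i]) auto
  have "integral {0..t} F + integral {t..t'} F = integral {0..t'} F"
    using t by (intro Henstock_Kurzweil_Integration.integral_combine[OF _ _ i]) auto
  moreover have "integral {0..t} F = X t - X 0" "integral {0..t'} F = X t' - X 0"
    using H t by (simp_all add: integral_unique)
  ultimately have "integral {t..t'} F = X t' - X t" by simp
  then show ?thesis using sub by (metis has_integral_integral)
qed

lemma continuous_indefinite_integral:
  fixes F X :: "real \<Rightarrow> real"
  assumes H: "\<And>t. 0 \<le> t \<Longrightarrow> (F has_integral (X t - X 0)) {0..t}" and T: "0 \<le> T"
  shows "continuous_on {0..T} X"
proof -
  have i: "F integrable_on {0..T}" using H[of T] T by (auto intro: has_integral_integrable)
  have c: "continuous_on {0..T} (\<lambda>s. X 0 + integral {0..s} F)"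
    by (intro continuous_intros indefinite_integral_continuous_1 i)
  show ?thesis
  proof (rule continuous_on_eq[OF c])
    fix r assume "r \<in> {0..T}"
    then show "X 0 + integral {0..r} F = X r" using integral_unique[OF H[of r]] by simp
  qed
qed

lemma continuous_by_modulus:
  fixes F g :: "real \<Rightarrow> real"
  assumes b: "\<And>r. r \<in> S \<Longrightarrow> \<bar>F r - F s\<bar> \<le> g r"
    and g: "continuous (at s within S) g" and g0: "g s = 0"
  shows "continuous (at s within S) F"
proof -
  have gl: "(g \<longlongrightarrow> 0) (at s within S)" using g g0 by (simp add: continuous_within)
  have ev: "\<forall>\<^sub>F r in at s within S. norm (F r - F s) \<le> g r"
    unfolding eventually_at_filter by (intro always_eventually) (simp add: b)
  have "((\<lambda>r. F r - F s) \<longlongrightarrow> 0) (at s within S)"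
    by (rule Lim_null_comparison[OF ev gl])
  then show ?thesis unfolding continuous_within by (rule LIM_zero_cancel)
qed

lemma Max_diff_le_sum:
  fixes F G :: "'a \<Rightarrow> real"
  assumes "finite I" "I \<noteq> {}"
  shows "\<bar>(MAX i\<in>I. F i) - (MAX i\<in>I. G i)\<bar> \<le> (\<Sum>i\<in>I. \<bar>F i - G i\<bar>)"
proof -
  have one: "(MAX i\<in>I. F i) \<le> (MAX i\<in>I. G i) + (\<Sum>i\<in>I. \<bar>F i - G i\<bar>)" for F G :: "'a \<Rightarrow> real"
  proof -
    have "(MAX i\<in>I. F i) \<in> F ` I" using Max_in[of "F ` I"] assms by simp
    then obtain i0 where i0: "i0 \<in> I" "(MAX i\<in>I. F i) = F i0" by auto
    have "G i0 \<le> (MAX i\<in>I. G i)" using i0 assms by (intro Max_ge) auto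
    moreover have "\<bar>F i0 - G i0\<bar> \<le> (\<Sum>i\<in>I. \<bar>F i - G i\<bar>)"
      using i0 assms by (intro member_le_sum) auto
    ultimately show ?thesis using i0 by linarith
  qed
  show ?thesis using one[of F G] one[of G F] by (simp add: abs_minus_commute abs_le_iff)
qed

lemma sqrt_sum_sq_absolutely_integrable:
  fixes v :: "'a \<Rightarrow> real \<Rightarrow> real" and S :: "real set"
  assumes "finite F" "\<And>m. m\<in>F \<Longrightarrow> v m absolutely_integrable_on S"
  shows "(\<lambda>r. sqrt (\<Sum>m\<in>F. (v m r)\<^sup>2)) absolutely_integrable_on S"
  using assms
proof (induction F rule: finite_induct)
  case empty
  then show ?case by simp
next
  case (insert m F)
  let ?g = "\<lambda>r. sqrt (\<Sum>m\<in>F. (v m r)\<^sup>2)"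
  have "(\<lambda>r. v m r *\<^sub>R (1::real,0::real) + ?g r *\<^sub>R (0,1)) absolutely_integrable_on S"
    using insert by (intro set_integral_add absolutely_integrable_scaleR_right) auto
  moreover have "sqrt (\<Sum>m\<in>insert m F. (v m r)\<^sup>2) = norm (v m r *\<^sub>R (1::real,0::real) + ?g r *\<^sub>R (0,1))"
    for r using insert by (simp add: norm_Pair sum_nonneg)
  ultimately show ?case using absolutely_integrable_norm by (fastforce simp: o_def)
qed

lemma sqrt_double_sum_sq_absolutely_integrable:
  fixes v :: "'a \<Rightarrow> 'b \<Rightarrow> real \<Rightarrow> real" and S :: "real set"
  assumes "finite I" "finite J" "\<And>i l. i\<in>I \<Longrightarrow> l \<in> J \<Longrightarrow> v i l absolutely_integrable_on S"
  shows "(\<lambda>r. sqrt (\<Sum>i\<in>I. \<Sum>l\<in>J. (v i l r)\<^sup>2)) absolutely_integrable_on S"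
proof -
  have "(\<lambda>r. sqrt (\<Sum>i\<in>I. (sqrt (\<Sum>l\<in>J. (v i l r)\<^sup>2))\<^sup>2)) absolutely_integrable_on S"
    using assms by (intro sqrt_sum_sq_absolutely_integrable) auto
  moreover have "(\<Sum>i\<in>I. (sqrt (\<Sum>l\<in>J. (v i l r)\<^sup>2))\<^sup>2) = (\<Sum>i\<in>I. \<Sum>l\<in>J. (v i l r)\<^sup>2)" for r
    by (intro sum.cong refl) (simp add: sum_nonneg)
  ultimately show ?thesis by simp
qed

lemma integral_between_const:
  fixes g :: "real \<Rightarrow> real"
  assumes "g integrable_on {p..q}" "p \<le> q" "\<And>r. r \<in> {p..q} \<Longrightarrow> c \<le> g r \<and> g r \<le> c'"
  shows "c * (q - p) \<le> integral {p..q} g \<and> integral {p..q} g \<le> c' * (q - p)"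
proof -
  have "integral {p..q} (\<lambda>r. c) \<le> integral {p..q} g" "integral {p..q} g \<le> integral {p..q} (\<lambda>r. c')"
    by (rule integral_le; use assms in auto)+
  then show ?thesis using assms(2) by (simp add: mult.commute)
qed

lemma eventually_close_on_right:
  fixes g :: "'p \<Rightarrow> real \<Rightarrow> real"
  assumes t: "0 \<le> t" "t < T" and F: "finite F" and c: "\<And>p. p \<in> F \<Longrightarrow> continuous_on {0..T} (g p)"
    and e: "0 < e"
  shows "\<forall>\<^sub>F h in at_right 0. \<forall>r\<in>{t..t+h}. \<forall>p\<in>F. \<bar>g p r - g p t\<bar> \<le> e"
proof -
  have "\<forall>\<^sub>F r in at t within {0..T}. \<forall>p\<in>F. \<bar>g p r - g p t\<bar> \<le> e"
  proof (rule eventually_ball_finite[OF F], intro ballI)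
    fix p assume p: "p \<in> F"
    have "(g p \<longlongrightarrow> g p t) (at t within {0..T})"
      using c[OF p] t by (simp add: continuous_on_eq_continuous_within continuous_within)
    then have "\<forall>\<^sub>F r in at t within {0..T}. dist (g p r) (g p t) < e" using e by (rule tendstoD)
    then show "\<forall>\<^sub>F r in at t within {0..T}. \<bar>g p r - g p t\<bar> \<le> e"
      by eventually_elim (simp add: dist_real_def)
  qed
  then obtain \<delta> where \<delta>: "\<delta> > 0" "\<forall>r\<in>{0..T}. r \<noteq> t \<and> dist r t < \<delta> \<longrightarrow> (\<forall>p\<in>F. \<bar>g p r - g p t\<bar> \<le> e)"
    unfolding eventually_at by auto
  show ?thesis unfolding eventually_at_right_field
  proof (intro exI[of _ "min \<delta> (T - t)"] conjI allI impI ballI)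
    show "0 < min \<delta> (T - t)" using \<delta> t by simp
    fix h r p assume h: "0 < h" "h < min \<delta> (T - t)" and r: "r \<in> {t..t+h}" and p: "p \<in> F"
    show "\<bar>g p r - g p t\<bar> \<le> e"
      using \<delta>(2)[rule_format, of r] r h t p e by (cases "r = t") (auto simp: dist_real_def)
  qed
qed

lemma weighted_sum_abs_le:
  fixes c c' v :: "'a \<Rightarrow> real"
  assumes "finite J" "\<And>j. j \<in> J \<Longrightarrow> 0 \<le> c j \<and> c j \<le> c' j" "\<And>j. j \<in> J \<Longrightarrow> \<bar>v j\<bar> \<le> e"
  shows "\<bar>\<Sum>j\<in>J. c j * v j\<bar> \<le> e * (\<Sum>j\<in>J. c' j)"
proof -
  have "\<bar>\<Sum>j\<in>J. c j * v j\<bar> \<le> (\<Sum>j\<in>J. \<bar>c j\<bar> * \<bar>v j\<bar>)"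
    by (rule order_trans[OF sum_abs]) (simp add: abs_mult)
  also have "\<dots> \<le> (\<Sum>j\<in>J. c' j * e)"
  proof (rule sum_mono)
    fix j assume "j \<in> J"
    then show "\<bar>c j\<bar> * \<bar>v j\<bar> \<le> c' j * e"
      using assms(2)[of j] assms(3)[of j] by (intro mult_mono) auto
  qed
  finally show ?thesis by (simp add: sum_distrib_left mult.commute)
qed

lemma sum_le_sqrt2_norm: "a + b \<le> sqrt 2 * sqrt (a\<^sup>2 + b\<^sup>2)" for a b :: real
proof -
  have "(a + b)\<^sup>2 \<le> 2 * (a\<^sup>2 + b\<^sup>2)" using zero_le_square[of "a-b"] by (simp add: power2_eq_square algebra_simps)
  then have "a + b \<le> sqrt (2 * (a\<^sup>2 + b\<^sup>2))" by (metis real_le_rsqrt)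
  also have "\<dots> = sqrt 2 * sqrt (a\<^sup>2 + b\<^sup>2)" by (rule real_sqrt_mult)
  finally show ?thesis .
qed

text \<open>Choice of the state tolerance eps in the one-step estimate.\<close>

lemma small_factor_exists:
  fixes C e :: real
  assumes C: "0 \<le> C" and e: "0 < e"
  shows "\<exists>\<epsilon>>0. real d * (2 * \<epsilon> * C) \<le> e"
proof (intro exI conjI)
  define Q where "Q = (C + 1) * (real d + 1)"
  have Q: "0 < Q" "C * real d \<le> Q"
    using C unfolding Q_def by (simp_all add: add_pos_nonneg mult_mono)
  show "0 < e / (2 * Q)" using e Q by simp
  have "real d * (2 * (e / (2 * Q)) * C) = e * (C * real d) / Q" using Q by (simp add: field_simps)
  also have "\<dots> \<le> e" using Q e by (simp add: divide_le_eq)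
  finally show "real d * (2 * (e / (2 * Q)) * C) \<le> e" .
qed

text \<open>The norm of an integral is at most the integral of the norm: write the norm of the
  integral as an inner product with a vector of norm at most one and apply Cauchy--Schwarz
  under the integral.\<close>

lemma enorm_integral_le:
  fixes g :: "real \<Rightarrow> pt"
  assumes comp: "\<And>l. l < d \<Longrightarrow> (\<lambda>r. g r l) integrable_on {p..q}"
    and norm: "(\<lambda>r. enorm d (g r)) integrable_on {p..q}"
  shows "enorm d (\<lambda>l. integral {p..q} (\<lambda>r. g r l)) \<le> integral {p..q} (\<lambda>r. enorm d (g r))"
proof -
  define \<omega> where "\<omega> l = integral {p..q} (\<lambda>r. g r l)" for l
  obtain c where c: "0 \<le> c" "c * enorm d \<omega> \<le> 1" "enorm d \<omega> = (\<Sum>l<d. (c * \<omega> l) * \<omega> l)"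
    using enorm_as_inner by blast
  have ic: "(\<lambda>r. (c * \<omega> l) * g r l) integrable_on {p..q}" if "l < d" for l
    by (intro integrable_on_mult_right comp that)
  have "integral {p..q} (\<lambda>r. \<Sum>l<d. (c * \<omega> l) * g r l)
      = (\<Sum>l<d. integral {p..q} (\<lambda>r. (c * \<omega> l) * g r l))"
    by (rule Henstock_Kurzweil_Integration.integral_sum) (use ic in auto)
  also have "\<dots> = enorm d \<omega>" unfolding c(3) by (simp add: \<omega>_def)
  finally have "enorm d \<omega> = integral {p..q} (\<lambda>r. \<Sum>l<d. (c * \<omega> l) * g r l)" ..
  also have "\<dots> \<le> integral {p..q} (\<lambda>r. enorm d (g r))"
  proof (rule integral_le)
    show "(\<lambda>r. \<Sum>l<d. (c * \<omega> l) * g r l) integrable_on {p..q}" by (intro integrable_sum ic) auto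
    show "(\<lambda>r. enorm d (g r)) integrable_on {p..q}" by (rule norm)
    fix r
    have "(\<Sum>l<d. (c * \<omega> l) * g r l) \<le> enorm d (\<lambda>l. c * \<omega> l) * enorm d (g r)"
      by (rule enorm_inner_le)
    also have "\<dots> \<le> enorm d (g r)"
      using c(1,2) by (simp add: enorm_scale mult_left_le_one_le enorm_nonneg)
    finally show "(\<Sum>l<d. (c * \<omega> l) * g r l) \<le> enorm d (g r)" .
  qed
  finally show ?thesis unfolding \<omega>_def .
qed

lemma enorm_integrable:
  fixes g :: "real \<Rightarrow> pt"
  assumes "\<And>l. l < d \<Longrightarrow> (\<lambda>r. g r l) absolutely_integrable_on {0..q}" and "0 \<le> p" "p \<le> q"
  shows "(\<lambda>r. enorm d (g r)) integrable_on {p..q}"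
proof -
  have "(\<lambda>r. enorm d (g r)) absolutely_integrable_on {0..q}"
    unfolding enorm_def
    using sqrt_sum_sq_absolutely_integrable[where F="{..<d}" and v="\<lambda>l r. g r l"] assms(1) by simp
  then have "(\<lambda>r. enorm d (g r)) integrable_on {0..q}"
    by (rule set_lebesgue_integral_eq_integral(1))
  then show ?thesis by (rule integrable_subinterval_real) (use assms in auto)
qed

text \<open>The arithmetic behind the contraction step: if a follower moves an A-fraction towards
  points at distance at most Mb (A <= c h) and a B-fraction towards the leaders (B >= b h),
  and its distance f is still above the target (1 - kappa s) Mb, then its distance decreases
  at least at rate kappa Mb, provided kappa (1 + (b + c) s) <= b.\<close>

lemma contraction_step_arith:
  fixes A B c h b f Mt Mb \<kappa> s :: real
  assumes "0 \<le> A" "0 \<le> B" "A \<le> c*h" "b*h \<le> B" "0 \<le> f" "Mt \<le> Mb" "0 \<le> Mb" "0 < h" "0 < b" "0 \<le> c"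
    "0 \<le> \<kappa>" "\<kappa> * (1 + (b+c)* s) \<le> b" "(1 - \<kappa>* s)*Mb \<le> f" "0 \<le> s"
  shows "A*(Mt - f) - B*f + \<kappa>*h*Mb \<le> 0"
proof (cases "f \<le> Mb")
  case True
  have 1: "A*(Mt - f) \<le> A*(Mb - f)" using assms by (intro mult_left_mono) auto
  have 2: "A*(Mb - f) \<le> (c*h)*(Mb - f)" using assms True by (intro mult_right_mono) auto
  have 3: "(b*h)*f \<le> B*f" using assms by (intro mult_right_mono) auto
  have 4: "h*((b+c)*((1 - \<kappa>* s)*Mb)) \<le> h*((b+c)*f)" using assms by (intro mult_left_mono) auto
  have 5: "h*((\<kappa> * (1 + (b+c)* s))*Mb) \<le> h*(b*Mb)" using assms by (intro mult_left_mono mult_right_mono) auto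
  have e1: "(c*h)*(Mb - f) - (b*h)*f + \<kappa>*h*Mb = h*((c+\<kappa>)*Mb) - h*((b+c)*f)" by (simp add: algebra_simps)
  have e2: "h*((c+\<kappa>)*Mb) - h*((b+c)*((1 - \<kappa>* s)*Mb)) = h*((\<kappa> * (1 + (b+c)* s))*Mb) - h*(b*Mb)" by (simp add: algebra_simps)
  have "A*(Mt - f) - B*f + \<kappa>*h*Mb \<le> (c*h)*(Mb - f) - (b*h)*f + \<kappa>*h*Mb" using 1 2 3 by linarith
  also have "\<dots> = h*((c+\<kappa>)*Mb) - h*((b+c)*f)" by (rule e1)
  also have "\<dots> \<le> h*((c+\<kappa>)*Mb) - h*((b+c)*((1 - \<kappa>* s)*Mb))" using 4 by linarith
  also have "\<dots> = h*((\<kappa> * (1 + (b+c)* s))*Mb) - h*(b*Mb)" by (rule e2)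
  also have "\<dots> \<le> 0" using 5 by linarith
  finally show ?thesis .
next
  case False
  have 1: "A*(Mt - f) \<le> 0" using assms False by (intro mult_nonneg_nonpos) auto
  have 3: "(b*h)*f \<le> B*f" using assms by (intro mult_right_mono) auto
  have 4: "(b*h)*Mb \<le> (b*h)*f" using assms False by (intro mult_left_mono) auto
  have k: "\<kappa> \<le> b"
  proof -
    have "\<kappa> * 1 \<le> \<kappa> * (1 + (b+c)* s)" using assms by (intro mult_left_mono) auto
    then show ?thesis using assms by simp
  qed
  have 5: "\<kappa>*h*Mb \<le> b*h*Mb" using assms k by (intro mult_right_mono) auto
  show ?thesis using 1 3 4 5 by linarith
qed

definition contraction_rate :: "nat \<Rightarrow> real \<Rightarrow> real \<Rightarrow> real \<Rightarrow> real" where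
  "contraction_rate n a_up b_low tauD = b_low / (1 + (b_low + real n * a_up) * tauD)"

lemma contraction_rate_props:
  fixes n :: nat and a_up b_low tauD s :: real
  assumes "0 < a_up" "0 < b_low" "0 < tauD"
  defines "\<kappa> \<equiv> contraction_rate n a_up b_low tauD"
  shows "0 < \<kappa>" and "\<kappa> * tauD < 1"
    and "0 \<le> s \<Longrightarrow> s \<le> tauD \<Longrightarrow> \<kappa> * (1 + (b_low + real n * a_up) * s) \<le> b_low"
proof -
  have pos: "0 < 1 + (b_low + real n * a_up) * tauD" using assms by (simp add: add_pos_nonneg)
  show "0 < \<kappa>" unfolding \<kappa>_def contraction_rate_def using assms pos by simp
  have "b_low * tauD < 1 + (b_low + real n * a_up) * tauD"
    using assms by (simp add: algebra_simps add_pos_nonneg)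
  then show "\<kappa> * tauD < 1" unfolding \<kappa>_def contraction_rate_def using pos by (simp add: field_simps)
  assume s: "0 \<le> s" "s \<le> tauD"
  have "1 + (b_low + real n * a_up) * s \<le> 1 + (b_low + real n * a_up) * tauD"
    using s assms by (intro add_left_mono mult_left_mono) auto
  then have "\<kappa> * (1 + (b_low + real n * a_up) * s) \<le> \<kappa> * (1 + (b_low + real n * a_up) * tauD)"
    using \<open>0 < \<kappa>\<close> by (intro mult_left_mono) auto
  also have "\<dots> = b_low" unfolding \<kappa>_def contraction_rate_def using pos by simp
  finally show "\<kappa> * (1 + (b_low + real n * a_up) * s) \<le> b_low" .
qed

text \<open>The hypotheses of the theorem that the proof actually uses, for one trajectory.\<close>

locale trajectory_setting =
  fixes n k d :: nat and tauD a_low a_up b_low :: real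
    and P :: "digraph set" and \<sigma> :: "real \<Rightarrow> digraph"
    and a b :: "nat \<Rightarrow> nat \<Rightarrow> (nat \<Rightarrow> pt) \<Rightarrow> (nat \<Rightarrow> pt) \<Rightarrow> real \<Rightarrow> real"
    and u :: "nat \<Rightarrow> (nat \<Rightarrow> pt) \<Rightarrow> real \<Rightarrow> pt" and w :: "nat \<Rightarrow> real \<Rightarrow> pt"
    and x y :: "real \<Rightarrow> nat \<Rightarrow> pt"
  assumes n_pos: "1 \<le> n" and k_pos: "1 \<le> k" and tauD_pos: "0 < tauD"
    and a_low_pos: "0 < a_low" and b_low_pos: "0 < b_low"
    and dwell: "dwell_switching tauD P \<sigma>"
    and a_bounds: "\<forall>i'\<in>{1..n}. \<forall>j'\<in>{1..n}. \<forall>xs ys t. a_low \<le> a i' j' xs ys t \<and> a i' j' xs ys t \<le> a_up"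
    and b_bound: "\<forall>i'\<in>{1..n}. \<forall>j'\<in>{1..k}. \<forall>xs ys t. b_low \<le> b i' j' xs ys t"
    and a_cont: "\<forall>i'\<in>{1..n}. \<forall>j'\<in>{1..n}. weight_cont d n k (a i' j')"
    and b_cont: "\<forall>i'\<in>{1..n}. \<forall>j'\<in>{1..k}. weight_cont d n k (b i' j')"
    and w_cont: "\<forall>i'\<in>{1..n}. \<forall>l<d. continuous_on {0..} (\<lambda>t. w i' t l)"
    and traj: "trajectory d n k \<sigma> a b u w x y"
begin

definition K where "K r = leader_hull d k (y r)"
definition f where "f i r = setdist_pt d (K r) (x r i)"
definition M where "M r = max_dist d n k (x r) (y r)"
definition zn where "zn = znorm d n k u w y"

lemma K_nonempty: "K r \<noteq> {}" unfolding K_def by (rule leader_hull_nonempty[OF k_pos])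

lemma f_nonneg: "0 \<le> f i r" unfolding f_def by (rule setdist_pt_nonneg[OF K_nonempty])

lemma M_eq_Max: "M r = (MAX i\<in>{1..n}. f i r)"
  unfolding M_def max_dist_def f_def K_def ..

lemma f_le_M: "i \<in> {1..n} \<Longrightarrow> f i r \<le> M r"
  unfolding M_eq_Max by (rule Max_ge) auto

lemma M_nonneg: "0 \<le> M r"
  using f_le_M[of 1 r] f_nonneg[of 1 r] n_pos by auto

lemma a_nonneg:
  assumes "i \<in> {1..n}" "j \<in> {1..n}"
  shows "0 \<le> a i j xs ys r"
proof -
  have "a_low \<le> a i j xs ys r" using a_bounds assms by blast
  then show ?thesis using a_low_pos by linarith
qed

lemma a_up_pos: "0 < a_up"
proof -
  have "a_low \<le> a 1 1 xs ys r \<and> a 1 1 xs ys r \<le> a_up" for xs ys r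
    using a_bounds n_pos by simp
  then show ?thesis using a_low_pos by (meson less_le_trans order_trans)
qed

text \<open>By the dwell-time condition the topology is constant on a right neighbourhood of
  every time: the next switching instant after t, if any, is isolated.\<close>

lemma sigma_locally_constant:
  assumes t: "0 \<le> t"
  shows "\<exists>\<eta>>0. \<forall>r\<in>{t..<t+\<eta>}. \<sigma> r = \<sigma> t"
proof -
  obtain S where S: "S \<subseteq> {0<..}" "\<forall>s\<in>S. \<forall>s'\<in>S. s \<noteq> s' \<longrightarrow> \<bar>s - s'\<bar> \<ge> tauD"
    "\<forall>a b. 0 \<le> a \<longrightarrow> a < b \<longrightarrow> {a<..<b} \<inter> S = {} \<longrightarrow> (\<forall>t\<in>{a..<b}. \<sigma> t = \<sigma> a)"
    using conjunct2[OF dwell[unfolded dwell_switching_def]] by blast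
  have const: "\<forall>r\<in>{t..<t'}. \<sigma> r = \<sigma> t" if "t < t'" "{t<..<t'} \<inter> S = {}" for t'
    using S(3) t that by blast
  show ?thesis
  proof (cases "\<exists>s\<in>S. t < s \<and> s < t + tauD")
    case True
    then obtain s0 where s0: "s0 \<in> S" "t < s0" "s0 < t + tauD" by blast
    have "{t<..<s0} \<inter> S = {}"
    proof (rule ccontr)
      assume "{t<..<s0} \<inter> S \<noteq> {}"
      then obtain s' where s': "s' \<in> S" "t < s'" "s' < s0" by auto
      then have "\<bar>s' - s0\<bar> \<ge> tauD" using S(2) s0(1) by (metis less_irrefl)
      then show False using s' s0 by linarith
    qed
    then have "\<forall>r\<in>{t..<s0}. \<sigma> r = \<sigma> t" by (rule const[OF s0(2)])
    moreover have "t + (s0 - t) = s0" "0 < s0 - t" using s0 by simp_all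
    ultimately show ?thesis by (metis)
  next
    case False
    then have "{t<..<t+tauD} \<inter> S = {}" by auto
    then have "\<forall>r\<in>{t..<t+tauD}. \<sigma> r = \<sigma> t" using tauD_pos by (intro const) auto
    then show ?thesis using tauD_pos by blast
  qed
qed

abbreviation rhs where "rhs s i l \<equiv> follower_rhs n k \<sigma> a b w x y s i l"

lemma x_has_integral: "0 \<le> T \<Longrightarrow> i \<in> {1..n} \<Longrightarrow> l < d \<Longrightarrow>
   ((\<lambda>s. rhs s i l) has_integral (x T i l - x 0 i l)) {0..T}"
  using traj unfolding trajectory_def by blast

lemma y_has_integral: "0 \<le> T \<Longrightarrow> j \<in> {1..k} \<Longrightarrow> l < d \<Longrightarrow>
   ((\<lambda>s. u j (y s) s l) has_integral (y T j l - y 0 j l)) {0..T}"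
  using traj unfolding trajectory_def by blast

lemma x_increment: "0 \<le> t \<Longrightarrow> t \<le> t' \<Longrightarrow> i \<in> {1..n} \<Longrightarrow> l < d \<Longrightarrow>
   ((\<lambda>s. rhs s i l) has_integral (x t' i l - x t i l)) {t..t'}"
  by (rule integral_increment[where X="\<lambda>s. x s i l"]) (auto intro: x_has_integral)

lemma y_increment: "0 \<le> t \<Longrightarrow> t \<le> t' \<Longrightarrow> j \<in> {1..k} \<Longrightarrow> l < d \<Longrightarrow>
   ((\<lambda>s. u j (y s) s l) has_integral (y t' j l - y t j l)) {t..t'}"
  by (rule integral_increment[where X="\<lambda>s. y s j l"]) (auto intro: y_has_integral)

lemma x_continuous: "0 \<le> T \<Longrightarrow> i \<in> {1..n} \<Longrightarrow> l < d \<Longrightarrow> continuous_on {0..T} (\<lambda>s. x s i l)"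
  by (rule continuous_indefinite_integral[where F="\<lambda>s. rhs s i l"]) (auto intro: x_has_integral)

lemma y_continuous: "0 \<le> T \<Longrightarrow> j \<in> {1..k} \<Longrightarrow> l < d \<Longrightarrow> continuous_on {0..T} (\<lambda>s. y s j l)"
  by (rule continuous_indefinite_integral[where F="\<lambda>s. u j (y s) s l"]) (auto intro: y_has_integral)

lemma w_continuous: "i \<in> {1..n} \<Longrightarrow> l < d \<Longrightarrow> continuous_on {0..T} (\<lambda>s. w i s l)"
  by (rule continuous_on_subset[of "{0..}"]) (use w_cont in auto)

lemma weight_along_trajectory:
  assumes g: "weight_cont d n k g" and T: "0 \<le> T"
  shows "continuous_on {0..T} (\<lambda>r. g (x r) (y r) r)"
  unfolding continuous_on_eq_continuous_within
proof (intro ballI)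
  fix s assume s: "s \<in> {0..T}"
  show "continuous (at s within {0..T}) (\<lambda>r. g (x r) (y r) r)"
    unfolding continuous_within_sequentially
  proof (intro allI impI)
    fix Tm :: "nat \<Rightarrow> real" assume Tm: "(\<forall>m. Tm m \<in> {0..T}) \<and> Tm \<longlonglongrightarrow> s"
    have seq: "(\<lambda>m. X (Tm m)) \<longlonglongrightarrow> X s" if "continuous_on {0..T} X" for X :: "real \<Rightarrow> real"
    proof -
      have "continuous (at s within {0..T}) X"
        using that s by (simp add: continuous_on_eq_continuous_within)
      then show ?thesis using Tm unfolding continuous_within_sequentially o_def by blast
    qed
    have X: "\<forall>i\<in>{1..n}. \<forall>l<d. (\<lambda>m. x (Tm m) i l) \<longlonglongrightarrow> x s i l"
      by (intro ballI allI impI seq x_continuous[OF T])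
    have Y: "\<forall>j\<in>{1..k}. \<forall>l<d. (\<lambda>m. y (Tm m) j l) \<longlonglongrightarrow> y s j l"
      by (intro ballI allI impI seq y_continuous[OF T])
    have "(\<lambda>m. g (x (Tm m)) (y (Tm m)) (Tm m)) \<longlonglongrightarrow> g (x s) (y s) s"
      by (rule g[unfolded weight_cont_def, rule_format, of "\<lambda>m. x (Tm m)" "x s" "\<lambda>m. y (Tm m)" "y s" Tm s])
        (use X Y Tm in auto)
    then show "((\<lambda>r. g (x r) (y r) r) \<circ> Tm) \<longlonglongrightarrow> g (x s) (y s) s" by (simp add: o_def)
  qed
qed

lemma zn_nonneg: "0 \<le> zn r"
  unfolding zn_def znorm_def by (simp add: sum_nonneg)

lemma zn_integrable:
  assumes pq: "0 \<le> p" "p \<le> q"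
  shows "zn integrable_on {p..q}"
proof -
  let ?A = "\<lambda>r. sqrt (\<Sum>i\<in>{1..k}. \<Sum>l<d. (u i (y r) r l)\<^sup>2)"
  let ?B = "\<lambda>r. sqrt (\<Sum>i\<in>{1..n}. \<Sum>l<d. (w i r l)\<^sup>2)"
  have u_abs: "(\<lambda>r. u j (y r) r l) absolutely_integrable_on {0..q}" if "j \<in> {1..k}" "l < d" for j l
    using traj order_trans[OF pq] that unfolding trajectory_def by blast
  have A: "?A absolutely_integrable_on {0..q}"
    by (intro sqrt_double_sum_sq_absolutely_integrable u_abs) auto
  have B: "?B absolutely_integrable_on {0..q}"
    by (intro sqrt_double_sum_sq_absolutely_integrable absolutely_integrable_continuous_real
        w_continuous) auto
  define v where "v m = (if m = (0::nat) then ?A else ?B)" for m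
  have "(\<lambda>r. sqrt (\<Sum>m\<in>{0,1}. (v m r)\<^sup>2)) absolutely_integrable_on {0..q}"
    using A B by (intro sqrt_sum_sq_absolutely_integrable) (auto simp: v_def)
  moreover have "(\<lambda>r. sqrt (\<Sum>m\<in>{0,1}. (v m r)\<^sup>2)) = zn"
    by (rule ext) (simp add: v_def zn_def znorm_def sum_nonneg)
  ultimately have "zn absolutely_integrable_on {0..q}" by simp
  then have "zn integrable_on {0..q}" by (rule set_lebesgue_integral_eq_integral(1))
  then show ?thesis by (rule integrable_subinterval_real) (use pq in auto)
qed

lemma zn_integral_split:
  "0 \<le> p \<Longrightarrow> p \<le> q \<Longrightarrow> q \<le> r \<Longrightarrow> integral {p..r} zn = integral {p..q} zn + integral {q..r} zn"
  by (metis Henstock_Kurzweil_Integration.integral_combine zn_integrable order_trans)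

lemma zn_integral_nonneg: "0 \<le> p \<Longrightarrow> p \<le> q \<Longrightarrow> 0 \<le> integral {p..q} zn"
  by (rule Henstock_Kurzweil_Integration.integral_nonneg[OF zn_integrable]) (auto simp: zn_nonneg)

lemma zn_integral_continuous: "0 \<le> p \<Longrightarrow> p \<le> q \<Longrightarrow> continuous_on {p..q} (\<lambda>s. integral {p..s} zn)"
  by (rule indefinite_integral_continuous_1[OF zn_integrable])

text \<open>Continuity of f i and M: between times s and r, f i changes by at most the motion
  of follower i plus the motion of all leaders.\<close>

definition motion where
  "motion i s r = enorm d (\<lambda>l. x r i l - x s i l) + (\<Sum>j\<in>{1..k}. enorm d (\<lambda>l. y r j l - y s j l))"

lemma f_change_le_motion: "\<bar>f i r - f i s\<bar> \<le> motion i s r"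
proof -
  have one: "f i r \<le> f i s + motion i s r" for r s
  proof -
    have "f i r \<le> setdist_pt d (K r) (x s i) + enorm d (\<lambda>l. x r i l - x s i l)"
      unfolding f_def by (rule setdist_pt_lipschitz[OF K_nonempty])
    also have "setdist_pt d (K r) (x s i)
        \<le> setdist_pt d (K s) (x s i) + (\<Sum>j\<in>{1..k}. enorm d (\<lambda>l. y r j l - y s j l))"
      unfolding K_def by (rule setdist_pt_hull_shift[OF k_pos])
        (intro member_le_sum, auto simp: enorm_nonneg)
    finally show ?thesis unfolding f_def motion_def by simp
  qed
  have "motion i r s = motion i s r" unfolding motion_def
    by (simp add: enorm_diff_commute[of d "x r i"] enorm_diff_commute[of d "y r _"])
  then show ?thesis using one[of r s] one[of s r] by linarith
qed

lemma motion_continuous: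
  assumes T: "0 \<le> T" and s: "s \<in> {0..T}" and i: "i \<in> {1..n}"
  shows "continuous (at s within {0..T}) (motion i s)" and "motion i s s = 0"
proof -
  have cx: "\<And>l. l < d \<Longrightarrow> continuous (at s within {0..T}) (\<lambda>r. x r i l)"
    using x_continuous[OF T i] s by (simp add: continuous_on_eq_continuous_within)
  have cy: "\<And>j l. j \<in> {1..k} \<Longrightarrow> l < d \<Longrightarrow> continuous (at s within {0..T}) (\<lambda>r. y r j l)"
    using y_continuous[OF T] s by (simp add: continuous_on_eq_continuous_within)
  show "continuous (at s within {0..T}) (motion i s)" unfolding motion_def
    by (intro continuous_add continuous_sum continuous_enorm_diff cx cy) auto
  show "motion i s s = 0" unfolding motion_def by (simp add: enorm_zero)
qed

lemma f_continuous: "0 \<le> T \<Longrightarrow> i \<in> {1..n} \<Longrightarrow> continuous_on {0..T} (f i)"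
  unfolding continuous_on_eq_continuous_within
  by (intro ballI continuous_by_modulus[OF f_change_le_motion] motion_continuous)

lemma M_continuous: "0 \<le> T \<Longrightarrow> continuous_on {0..T} M"
  unfolding continuous_on_eq_continuous_within
proof (intro ballI)
  fix s assume T: "0 \<le> T" and s: "s \<in> {0..T}"
  show "continuous (at s within {0..T}) M"
  proof (rule continuous_by_modulus[where g="\<lambda>r. \<Sum>i\<in>{1..n}. motion i s r"])
    fix r
    have "\<bar>M r - M s\<bar> \<le> (\<Sum>i\<in>{1..n}. \<bar>f i r - f i s\<bar>)"
      unfolding M_eq_Max using n_pos by (intro Max_diff_le_sum) auto
    also have "\<dots> \<le> (\<Sum>i\<in>{1..n}. motion i s r)" by (intro sum_mono f_change_le_motion)
    finally show "\<bar>M r - M s\<bar> \<le> (\<Sum>i\<in>{1..n}. motion i s r)" .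
  next
    show "continuous (at s within {0..T}) (\<lambda>r. \<Sum>i\<in>{1..n}. motion i s r)"
      by (intro continuous_sum motion_continuous[OF T s]) auto
    show "(\<Sum>i\<in>{1..n}. motion i s s) = 0" using motion_continuous(2)[OF T s] by simp
  qed
qed

section \<open>The one-step estimate\<close>

text \<open>Integrated weights over [t, t+h], and the increment of follower i over [t, t+h]
  computed with the states frozen at time t and the topology sigma t.\<close>

definition a_int where "a_int i j t h = integral {t..t+h} (\<lambda>r. a i j (x r) (y r) r)"
definition b_int where "b_int i j t h = integral {t..t+h} (\<lambda>r. b i j (x r) (y r) r)"
definition A_int where "A_int i t h = (\<Sum>j\<in>Nset n (\<sigma> t) i. a_int i j t h)"
definition B_int where "B_int i t h = (\<Sum>j\<in>Lset k (\<sigma> t) i. b_int i j t h)"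

definition frozen_increment where
  "frozen_increment i t h l =
     (\<Sum>j\<in>Nset n (\<sigma> t) i. a_int i j t h * (x t j l - x t i l))
   + (\<Sum>j\<in>Lset k (\<sigma> t) i. b_int i j t h * (y t j l - x t i l))
   + integral {t..t+h} (\<lambda>r. w i r l)"

lemma Nset_sub: "Nset n E i \<subseteq> {1..n}" and Lset_sub: "Lset k E i \<subseteq> {1..k}"
  unfolding Nset_def Lset_def by auto

lemma a_along_continuous:
  "0 \<le> t \<Longrightarrow> 0 \<le> h \<Longrightarrow> i \<in> {1..n} \<Longrightarrow> j \<in> {1..n} \<Longrightarrow>
    continuous_on {t..t+h} (\<lambda>r. a i j (x r) (y r) r)"
  by (rule continuous_on_subset[OF weight_along_trajectory[of _ "t+h"]]) (use a_cont in auto)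

lemma b_along_continuous:
  "0 \<le> t \<Longrightarrow> 0 \<le> h \<Longrightarrow> i \<in> {1..n} \<Longrightarrow> j \<in> {1..k} \<Longrightarrow>
    continuous_on {t..t+h} (\<lambda>r. b i j (x r) (y r) r)"
  by (rule continuous_on_subset[OF weight_along_trajectory[of _ "t+h"]]) (use b_cont in auto)

lemma a_int_bounds:
  assumes t: "0 \<le> t" and h: "0 \<le> h" and i: "i \<in> {1..n}" and j: "j \<in> {1..n}"
  shows "a_low * h \<le> a_int i j t h \<and> a_int i j t h \<le> a_up * h"
proof -
  have "(\<lambda>r. a i j (x r) (y r) r) integrable_on {t..t+h}"
    by (rule integrable_continuous_real[OF a_along_continuous[OF t h i j]])
  moreover have "a_low \<le> a i j (x r) (y r) r \<and> a i j (x r) (y r) r \<le> a_up" for r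
    using a_bounds i j by blast
  ultimately show ?thesis
    using integral_between_const[of _ t "t+h" a_low a_up] h unfolding a_int_def by simp
qed

lemma b_int_bounds:
  assumes t: "0 \<le> t" and h: "0 \<le> h" and i: "i \<in> {1..n}" and j: "j \<in> {1..k}"
    and bmax: "\<And>r. r \<in> {t..t+h} \<Longrightarrow> b i j (x r) (y r) r \<le> bmax"
  shows "b_low * h \<le> b_int i j t h \<and> b_int i j t h \<le> bmax * h"
proof -
  have "(\<lambda>r. b i j (x r) (y r) r) integrable_on {t..t+h}"
    by (rule integrable_continuous_real[OF b_along_continuous[OF t h i j]])
  moreover have "b_low \<le> b i j (x r) (y r) r" for r
    using b_bound i j by blast
  ultimately show ?thesis
    using integral_between_const[of _ t "t+h" b_low bmax] h bmax unfolding b_int_def by simp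
qed

lemma A_int_bounds:
  assumes t: "0 \<le> t" and h: "0 \<le> h" and i: "i \<in> {1..n}"
  shows "\<forall>j\<in>Nset n (\<sigma> t) i. 0 \<le> a_int i j t h" and "0 \<le> A_int i t h"
    and "A_int i t h \<le> real n * a_up * h"
proof -
  let ?N = "Nset n (\<sigma> t) i"
  have \<alpha>: "0 \<le> a_int i j t h \<and> a_int i j t h \<le> a_up * h" if "j \<in> ?N" for j
    using a_int_bounds[OF t h i subsetD[OF Nset_sub that]] a_low_pos h
    by (meson mult_nonneg_nonneg less_imp_le order_trans)
  then show "\<forall>j\<in>?N. 0 \<le> a_int i j t h" by blast
  then show "0 \<le> A_int i t h" unfolding A_int_def by (simp add: sum_nonneg)
  have "A_int i t h \<le> real (card ?N) * (a_up * h)"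
    unfolding A_int_def using \<alpha> by (intro sum_bounded_above) auto
  also have "\<dots> \<le> real n * (a_up * h)"
    using card_mono[OF _ Nset_sub] a_up_pos h by (intro mult_right_mono) auto
  finally show "A_int i t h \<le> real n * a_up * h" by (simp add: mult.assoc)
qed

lemma B_int_bounds:
  fixes bmax :: "nat \<Rightarrow> real"
  assumes t: "0 \<le> t" and h: "0 \<le> h" and i: "i \<in> {1..n}"
    and bb: "\<And>r j. r \<in> {t..t+h} \<Longrightarrow> j \<in> {1..k} \<Longrightarrow> b i j (x r) (y r) r \<le> bmax j"
  shows "\<forall>j\<in>Lset k (\<sigma> t) i. 0 \<le> b_int i j t h" and "0 \<le> B_int i t h"
    and "B_int i t h \<le> (\<Sum>j\<in>{1..k}. bmax j) * h"
    and "\<forall>j\<in>{1..k}. (Inr j, Inl i) \<in> \<sigma> t \<longrightarrow> b_low * h \<le> B_int i t h"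
proof -
  let ?L = "Lset k (\<sigma> t) i"
  have L: "finite ?L" by (rule finite_subset[OF Lset_sub], simp)
  have \<beta>: "b_low * h \<le> b_int i j t h \<and> b_int i j t h \<le> bmax j * h" if "j \<in> ?L" for j
    using b_int_bounds[OF t h i subsetD[OF Lset_sub that] bb] subsetD[OF Lset_sub that] by blast
  have \<beta>0: "0 \<le> b_int i j t h" if "j \<in> ?L" for j
    using \<beta>[OF that] b_low_pos h by (meson mult_nonneg_nonneg less_imp_le order_trans)
  then show "\<forall>j\<in>?L. 0 \<le> b_int i j t h" by blast
  then show "0 \<le> B_int i t h" unfolding B_int_def by (simp add: sum_nonneg)
  have bmax_nonneg: "0 \<le> bmax j" if j: "j \<in> {1..k}" for j
  proof -
    have "b_low \<le> b i j (x t) (y t) t" using b_bound i j by blast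
    then show ?thesis using bb[OF _ j, of t] h b_low_pos by simp
  qed
  have "B_int i t h \<le> (\<Sum>j\<in>?L. bmax j * h)" unfolding B_int_def using \<beta> by (intro sum_mono) auto
  also have "\<dots> \<le> (\<Sum>j\<in>{1..k}. bmax j * h)"
    using Lset_sub bmax_nonneg h by (intro sum_mono2) auto
  finally show "B_int i t h \<le> (\<Sum>j\<in>{1..k}. bmax j) * h" by (simp add: sum_distrib_right)
  show "\<forall>j\<in>{1..k}. (Inr j, Inl i) \<in> \<sigma> t \<longrightarrow> b_low * h \<le> B_int i t h"
  proof (intro ballI impI)
    fix j assume "j \<in> {1..k}" "(Inr j, Inl i) \<in> \<sigma> t"
    then have j: "j \<in> ?L" unfolding Lset_def by simp
    then have "b_int i j t h \<le> B_int i t h" unfolding B_int_def using \<beta>0 L by (intro member_le_sum) auto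
    then show "b_low * h \<le> B_int i t h" using \<beta>[OF j] by simp
  qed
qed

lemma frozen_increment_integral:
  assumes t: "0 \<le> t" and h: "0 \<le> h" and i: "i \<in> {1..n}" and l: "l < d"
  shows "frozen_increment i t h l = integral {t..t+h} (\<lambda>r.
      (\<Sum>j\<in>Nset n (\<sigma> t) i. a i j (x r) (y r) r * (x t j l - x t i l))
    + (\<Sum>j\<in>Lset k (\<sigma> t) i. b i j (x r) (y r) r * (y t j l - x t i l)) + w i r l)"
proof -
  let ?N = "Nset n (\<sigma> t) i" and ?L = "Lset k (\<sigma> t) i"
  have fin: "finite ?N" "finite ?L"
    by (rule finite_subset[OF Nset_sub] finite_subset[OF Lset_sub], simp)+
  have ia: "(\<lambda>r. a i j (x r) (y r) r * (x t j l - x t i l)) integrable_on {t..t+h}" if "j \<in> ?N" for j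
    using subsetD[OF Nset_sub that] t h i
    by (intro integrable_on_mult_left integrable_continuous_real a_along_continuous) auto
  have ib: "(\<lambda>r. b i j (x r) (y r) r * (y t j l - x t i l)) integrable_on {t..t+h}" if "j \<in> ?L" for j
    using subsetD[OF Lset_sub that] t h i
    by (intro integrable_on_mult_left integrable_continuous_real b_along_continuous) auto
  have iw: "(\<lambda>r. w i r l) integrable_on {t..t+h}"
    by (rule integrable_continuous_real[OF continuous_on_subset[OF w_continuous[OF i l, of "t+h"]]])
      (use t in auto)
  have sN: "integral {t..t+h} (\<lambda>r. \<Sum>j\<in>?N. a i j (x r) (y r) r * (x t j l - x t i l))
      = (\<Sum>j\<in>?N. a_int i j t h * (x t j l - x t i l))"
    by (subst Henstock_Kurzweil_Integration.integral_sum) (use fin ia in \<open>auto simp: a_int_def\<close>)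
  have sL: "integral {t..t+h} (\<lambda>r. \<Sum>j\<in>?L. b i j (x r) (y r) r * (y t j l - x t i l))
      = (\<Sum>j\<in>?L. b_int i j t h * (y t j l - x t i l))"
    by (subst Henstock_Kurzweil_Integration.integral_sum) (use fin ib in \<open>auto simp: b_int_def\<close>)
  have iN: "(\<lambda>r. \<Sum>j\<in>?N. a i j (x r) (y r) r * (x t j l - x t i l)) integrable_on {t..t+h}"
    by (intro integrable_sum fin ia)
  have iL: "(\<lambda>r. \<Sum>j\<in>?L. b i j (x r) (y r) r * (y t j l - x t i l)) integrable_on {t..t+h}"
    by (intro integrable_sum fin ib)
  show ?thesis unfolding frozen_increment_def
    by (simp add: Henstock_Kurzweil_Integration.integral_add iN iL iw integrable_add sN sL)
qed

lemma frozen_drift_error: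
  fixes bmax :: "nat \<Rightarrow> real"
  assumes i: "i \<in> {1..n}"
    and xe: "\<And>j. j \<in> {1..n} \<Longrightarrow> \<bar>x r j l - x t j l\<bar> \<le> \<epsilon>"
    and ye: "\<And>j. j \<in> {1..k} \<Longrightarrow> \<bar>y r j l - y t j l\<bar> \<le> \<epsilon>"
    and bb: "\<And>j. j \<in> {1..k} \<Longrightarrow> b i j (x r) (y r) r \<le> bmax j"
  shows "\<bar>(\<Sum>j\<in>Nset n E i. a i j (x r) (y r) r * ((x r j l - x t j l) - (x r i l - x t i l)))
      + (\<Sum>j\<in>Lset k E i. b i j (x r) (y r) r * ((y r j l - y t j l) - (x r i l - x t i l)))\<bar>
    \<le> 2 * \<epsilon> * (real n * a_up + (\<Sum>j\<in>{1..k}. bmax j))"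
proof -
  let ?N = "Nset n E i" and ?L = "Lset k E i"
  let ?a = "\<lambda>j. a i j (x r) (y r) r" and ?b = "\<lambda>j. b i j (x r) (y r) r"
  have N: "?N \<subseteq> {1..n}" "finite ?N" by (rule Nset_sub, rule finite_subset[OF Nset_sub], simp)
  have L: "?L \<subseteq> {1..k}" "finite ?L" by (rule Lset_sub, rule finite_subset[OF Lset_sub], simp)
  have eps: "0 \<le> \<epsilon>" using xe[OF i] by simp
  have b_between: "0 \<le> ?b j \<and> ?b j \<le> bmax j" if "j \<in> {1..k}" for j
  proof -
    have "b_low \<le> ?b j" using b_bound i that by blast
    then show ?thesis using bb[OF that] b_low_pos by linarith
  qed
  have bmax_nonneg: "0 \<le> bmax j" if "j \<in> {1..k}" for j using b_between[OF that] by linarith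
  have sumN: "\<bar>\<Sum>j\<in>?N. ?a j * ((x r j l - x t j l) - (x r i l - x t i l))\<bar> \<le> 2 * \<epsilon> * (\<Sum>j\<in>?N. a_up)"
  proof (rule weighted_sum_abs_le[OF N(2)])
    fix j assume "j \<in> ?N"
    then have j: "j \<in> {1..n}" using N(1) by blast
    show "0 \<le> ?a j \<and> ?a j \<le> a_up" using a_nonneg[OF i j] a_bounds i j by blast
    show "\<bar>(x r j l - x t j l) - (x r i l - x t i l)\<bar> \<le> 2 * \<epsilon>" using xe[OF j] xe[OF i] by linarith
  qed
  have sumL: "\<bar>\<Sum>j\<in>?L. ?b j * ((y r j l - y t j l) - (x r i l - x t i l))\<bar> \<le> 2 * \<epsilon> * (\<Sum>j\<in>?L. bmax j)"
  proof (rule weighted_sum_abs_le[OF L(2)])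
    fix j assume "j \<in> ?L"
    then have j: "j \<in> {1..k}" using L(1) by blast
    show "0 \<le> ?b j \<and> ?b j \<le> bmax j" by (rule b_between[OF j])
    show "\<bar>(y r j l - y t j l) - (x r i l - x t i l)\<bar> \<le> 2 * \<epsilon>" using ye[OF j] xe[OF i] by linarith
  qed
  have "(\<Sum>j\<in>?N. a_up) \<le> real n * a_up"
    using card_mono[OF _ N(1)] a_up_pos by (simp add: mult_right_mono)
  moreover have "(\<Sum>j\<in>?L. bmax j) \<le> (\<Sum>j\<in>{1..k}. bmax j)"
    using L bmax_nonneg by (intro sum_mono2) auto
  ultimately have "2 * \<epsilon> * (\<Sum>j\<in>?N. a_up) + 2 * \<epsilon> * (\<Sum>j\<in>?L. bmax j)
      \<le> 2 * \<epsilon> * (real n * a_up + (\<Sum>j\<in>{1..k}. bmax j))"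
    using eps by (simp add: distrib_left[symmetric] mult_left_mono)
  then show ?thesis using sumN sumL by (intro order_trans[OF abs_triangle_ineq]) linarith
qed

lemma frozen_increment_error:
  assumes t: "0 \<le> t" and h: "0 \<le> h" and i: "i \<in> {1..n}" and l: "l < d"
    and \<sigma>c: "\<And>r. r \<in> {t..t+h} \<Longrightarrow> \<sigma> r = \<sigma> t"
    and xe: "\<And>r j. r \<in> {t..t+h} \<Longrightarrow> j \<in> {1..n} \<Longrightarrow> \<bar>x r j l - x t j l\<bar> \<le> \<epsilon>"
    and ye: "\<And>r j. r \<in> {t..t+h} \<Longrightarrow> j \<in> {1..k} \<Longrightarrow> \<bar>y r j l - y t j l\<bar> \<le> \<epsilon>"
    and bb: "\<And>r j. r \<in> {t..t+h} \<Longrightarrow> j \<in> {1..k} \<Longrightarrow> b i j (x r) (y r) r \<le> bmax j"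
  shows "\<bar>x (t+h) i l - x t i l - frozen_increment i t h l\<bar>
    \<le> 2 * \<epsilon> * (real n * a_up + (\<Sum>j\<in>{1..k}. bmax j)) * h"
proof -
  let ?N = "Nset n (\<sigma> t) i" and ?L = "Lset k (\<sigma> t) i"
  let ?a = "\<lambda>j r. a i j (x r) (y r) r" and ?b = "\<lambda>j r. b i j (x r) (y r) r"
  have N: "?N \<subseteq> {1..n}" and L: "?L \<subseteq> {1..k}" by (rule Nset_sub Lset_sub)+
  define g1 where "g1 r = (\<Sum>j\<in>?N. ?a j r * (x r j l - x r i l))
      + (\<Sum>j\<in>?L. ?b j r * (y r j l - x r i l)) + w i r l" for r
  define g2 where "g2 r = (\<Sum>j\<in>?N. ?a j r * (x t j l - x t i l))
      + (\<Sum>j\<in>?L. ?b j r * (y t j l - x t i l)) + w i r l" for r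
  have sub: "{t..t+h} \<subseteq> {0..t+h}" using t by auto
  have cont: "continuous_on {t..t+h} g1" "continuous_on {t..t+h} g2"
    unfolding g1_def g2_def using N L t h i l
    by (intro continuous_intros a_along_continuous b_along_continuous
        continuous_on_subset[OF x_continuous sub] continuous_on_subset[OF y_continuous sub]
        continuous_on_subset[OF w_continuous sub]; auto)+
  have "x (t+h) i l - x t i l = integral {t..t+h} (\<lambda>r. rhs r i l)"
    using x_increment[OF t _ i l, of "t+h"] h by (simp add: integral_unique)
  also have "\<dots> = integral {t..t+h} g1"
  proof (rule integral_cong)
    fix r assume "r \<in> {t..t+h}"
    then have "\<sigma> r = \<sigma> t" by (rule \<sigma>c)
    then show "rhs r i l = g1 r" unfolding follower_rhs_def g1_def by simp
  qed
  finally have "x (t+h) i l - x t i l - frozen_increment i t h l = integral {t..t+h} (\<lambda>r. g1 r - g2 r)"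
    using cont by (simp add: frozen_increment_integral[OF t h i l] g2_def[symmetric]
        Henstock_Kurzweil_Integration.integral_diff integrable_continuous_real)
  moreover have "norm (integral {t..t+h} (\<lambda>r. g1 r - g2 r))
      \<le> 2 * \<epsilon> * (real n * a_up + (\<Sum>j\<in>{1..k}. bmax j)) * (t + h - t)"
  proof (rule integral_bound)
    show "t \<le> t + h" using h by simp
    show "continuous_on {t..t+h} (\<lambda>r. g1 r - g2 r)" using cont by (intro continuous_intros)
    fix r assume r: "r \<in> {t..t+h}"
    have "g1 r - g2 r = (\<Sum>j\<in>?N. ?a j r * (x r j l - x r i l) - ?a j r * (x t j l - x t i l))
        + (\<Sum>j\<in>?L. ?b j r * (y r j l - x r i l) - ?b j r * (y t j l - x t i l))"
      unfolding g1_def g2_def by (simp add: sum_subtractf)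
    also have "\<dots> = (\<Sum>j\<in>?N. ?a j r * ((x r j l - x t j l) - (x r i l - x t i l)))
        + (\<Sum>j\<in>?L. ?b j r * ((y r j l - y t j l) - (x r i l - x t i l)))"
      by (intro arg_cong2[where f="(+)"] sum.cong refl) (simp_all add: algebra_simps)
    finally have split: "g1 r - g2 r = \<dots>" .
    show "norm (g1 r - g2 r) \<le> 2 * \<epsilon> * (real n * a_up + (\<Sum>j\<in>{1..k}. bmax j))"
      unfolding split real_norm_def by (rule frozen_drift_error[OF i xe[OF r] ye[OF r] bb[OF r]])
  qed
  ultimately show ?thesis by simp
qed

lemma input_norms_le:
  assumes i: "i \<in> {1..n}" and j: "j \<in> {1..k}"
  shows "enorm d (w i r) + enorm d (u j (y r) r) \<le> sqrt 2 * zn r"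
proof -
  have "(enorm d (w i r))\<^sup>2 + (enorm d (u j (y r) r))\<^sup>2
      = (\<Sum>l<d. (w i r l)\<^sup>2) + (\<Sum>l<d. (u j (y r) r l)\<^sup>2)"
    by (simp add: enorm_def sum_nonneg)
  also have "\<dots> \<le> (\<Sum>i'\<in>{1..n}. \<Sum>l<d. (w i' r l)\<^sup>2) + (\<Sum>i'\<in>{1..k}. \<Sum>l<d. (u i' (y r) r l)\<^sup>2)"
    using i j by (intro add_mono member_le_sum[where f="\<lambda>i'. \<Sum>l<d. (w i' r l)\<^sup>2"]
        member_le_sum[where f="\<lambda>i'. \<Sum>l<d. (u i' (y r) r l)\<^sup>2"], auto intro: sum_nonneg)
  finally have "sqrt ((enorm d (w i r))\<^sup>2 + (enorm d (u j (y r) r))\<^sup>2) \<le> zn r"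
    unfolding zn_def znorm_def using real_sqrt_le_mono by (simp add: add.commute)
  then show ?thesis
    using sum_le_sqrt2_norm[of "enorm d (w i r)" "enorm d (u j (y r) r)"]
    by (smt (verit) mult_left_mono real_sqrt_ge_zero)
qed

lemma input_increment_bound:
  assumes pq: "0 \<le> p" "p \<le> q" and i: "i \<in> {1..n}" and j: "j \<in> {1..k}"
  shows "enorm d (\<lambda>l. integral {p..q} (\<lambda>r. w i r l)) + enorm d (\<lambda>l. y q j l - y p j l)
         \<le> sqrt 2 * integral {p..q} zn"
proof -
  have q: "0 \<le> q" using pq by simp
  have w_abs: "(\<lambda>r. w i r l) absolutely_integrable_on {0..q}" if "l < d" for l
    by (intro absolutely_integrable_continuous_real w_continuous i that)
  have u_abs: "(\<lambda>r. u j (y r) r l) absolutely_integrable_on {0..q}" if "l < d" for l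
    using traj q j that unfolding trajectory_def by blast
  have iw: "(\<lambda>r. enorm d (w i r)) integrable_on {p..q}" by (rule enorm_integrable[OF w_abs pq])
  have iu: "(\<lambda>r. enorm d (u j (y r) r)) integrable_on {p..q}" by (rule enorm_integrable[OF u_abs pq])
  have "enorm d (\<lambda>l. integral {p..q} (\<lambda>r. w i r l)) \<le> integral {p..q} (\<lambda>r. enorm d (w i r))"
    using w_abs pq by (intro enorm_integral_le iw integrable_continuous_real
        continuous_on_subset[OF w_continuous[OF i, of _ q]]) auto
  moreover have "enorm d (\<lambda>l. y q j l - y p j l) \<le> integral {p..q} (\<lambda>r. enorm d (u j (y r) r))"
  proof -
    have "enorm d (\<lambda>l. y q j l - y p j l) = enorm d (\<lambda>l. integral {p..q} (\<lambda>r. u j (y r) r l))"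
    proof (rule enorm_cong)
      fix l assume "l < d"
      show "y q j l - y p j l = integral {p..q} (\<lambda>r. u j (y r) r l)"
        by (rule integral_unique[symmetric, OF y_increment[OF pq j \<open>l < d\<close>]])
    qed
    also have "\<dots> \<le> integral {p..q} (\<lambda>r. enorm d (u j (y r) r))"
      using y_increment[OF pq j] by (intro enorm_integral_le iu) blast
    finally show ?thesis .
  qed
  moreover have "integral {p..q} (\<lambda>r. enorm d (w i r)) + integral {p..q} (\<lambda>r. enorm d (u j (y r) r))
      \<le> integral {p..q} (\<lambda>r. sqrt 2 * zn r)"
  proof (subst Henstock_Kurzweil_Integration.integral_add[symmetric, OF iw iu], rule integral_le)
    show "(\<lambda>r. enorm d (w i r) + enorm d (u j (y r) r)) integrable_on {p..q}"
      by (rule integrable_add[OF iw iu])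
    show "(\<lambda>r. sqrt 2 * zn r) integrable_on {p..q}" by (intro integrable_on_mult_right zn_integrable pq)
    show "enorm d (w i r) + enorm d (u j (y r) r) \<le> sqrt 2 * zn r" for r
      by (rule input_norms_le[OF i j])
  qed
  ultimately show ?thesis by simp
qed

text \<open>The frozen point x_i(t) plus the frozen drift is the convex combination
  (1 - A - B) x_i(t) + sum alpha_j x_j(t) + sum beta_j y_j(t), so its distance to the hull
  is at most (1 - A - B) f_i(t) + A M(t).\<close>

lemma frozen_point_dist:
  assumes i: "i \<in> {1..n}"
    and \<alpha>: "\<And>j. j \<in> Nset n (\<sigma> t) i \<Longrightarrow> 0 \<le> a_int i j t h"
    and \<beta>: "\<And>j. j \<in> Lset k (\<sigma> t) i \<Longrightarrow> 0 \<le> b_int i j t h"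
    and AB: "A_int i t h + B_int i t h \<le> 1"
  shows "setdist_pt d (K t) (\<lambda>l. x t i l + frozen_increment i t h l - integral {t..t+h} (\<lambda>r. w i r l))
    \<le> (1 - A_int i t h - B_int i t h) * f i t + A_int i t h * M t"
proof -
  let ?N = "Nset n (\<sigma> t) i" and ?L = "Lset k (\<sigma> t) i"
  have N: "finite ?N" by (rule finite_subset[OF Nset_sub], simp)
  have "setdist_pt d (K t) (\<lambda>l. x t i l + frozen_increment i t h l - integral {t..t+h} (\<lambda>r. w i r l))
      \<le> (1 - A_int i t h - B_int i t h) * f i t + (\<Sum>j\<in>?N. a_int i j t h * f j t)"
    unfolding K_def f_def A_int_def B_int_def
  proof (rule setdist_follower_leader_combination[OF k_pos N Lset_sub \<alpha> \<beta>])
    show "(\<Sum>j\<in>?N. a_int i j t h) + (\<Sum>j\<in>?L. b_int i j t h) \<le> 1"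
      using AB unfolding A_int_def B_int_def .
    fix l
    show "x t i l + frozen_increment i t h l - integral {t..t+h} (\<lambda>r. w i r l)
      = (1 - (\<Sum>j\<in>?N. a_int i j t h) - (\<Sum>j\<in>?L. b_int i j t h)) * x t i l
        + (\<Sum>j\<in>?N. a_int i j t h * x t j l) + (\<Sum>j\<in>?L. b_int i j t h * y t j l)"
      unfolding frozen_increment_def
      by (simp add: algebra_simps sum_subtractf sum_distrib_left)
  qed
  also have "(\<Sum>j\<in>?N. a_int i j t h * f j t) \<le> (\<Sum>j\<in>?N. a_int i j t h * M t)"
  proof (rule sum_mono)
    fix j assume j: "j \<in> ?N"
    then have "j \<in> {1..n}" using Nset_sub by blast
    then show "a_int i j t h * f j t \<le> a_int i j t h * M t"
      using \<alpha>[OF j] f_le_M by (intro mult_left_mono) auto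
  qed
  finally show ?thesis unfolding A_int_def by (simp add: sum_distrib_right)
qed

text \<open>The one-step estimate for follower i over [t, t+h]: an A-fraction of the way towards
  the other followers (which are at distance at most M t), a B-fraction towards the leaders
  (distance 0), B being at least b_low h if some leader feeds i, plus the input and an
  error e h.\<close>

definition one_step_bound where
  "one_step_bound i t h e \<longleftrightarrow> (\<exists>A B. 0 \<le> A \<and> A \<le> real n * a_up * h \<and> 0 \<le> B \<and> A + B \<le> 1 \<and>
     (\<forall>j\<in>{1..k}. (Inr j, Inl i) \<in> \<sigma> t \<longrightarrow> b_low * h \<le> B) \<and>
     f i (t+h) \<le> (1 - A - B) * f i t + A * M t + sqrt 2 * integral {t..t+h} zn + e * h)"

lemma one_step_bound_if_small:
  fixes bmax :: "nat \<Rightarrow> real" and \<epsilon> e :: real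
  defines "C \<equiv> real n * a_up + (\<Sum>j\<in>{1..k}. bmax j)"
  assumes t: "0 \<le> t" and h: "0 < h" and i: "i \<in> {1..n}"
    and \<sigma>c: "\<And>r. r \<in> {t..t+h} \<Longrightarrow> \<sigma> r = \<sigma> t"
    and xe: "\<And>r j l. r \<in> {t..t+h} \<Longrightarrow> j \<in> {1..n} \<Longrightarrow> l < d \<Longrightarrow> \<bar>x r j l - x t j l\<bar> \<le> \<epsilon>"
    and ye: "\<And>r j l. r \<in> {t..t+h} \<Longrightarrow> j \<in> {1..k} \<Longrightarrow> l < d \<Longrightarrow> \<bar>y r j l - y t j l\<bar> \<le> \<epsilon>"
    and bb: "\<And>r j. r \<in> {t..t+h} \<Longrightarrow> j \<in> {1..k} \<Longrightarrow> b i j (x r) (y r) r \<le> bmax j"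
    and small_h: "C * h \<le> 1" and small_eps: "real d * (2 * \<epsilon> * C) \<le> e"
  shows "one_step_bound i t h e"
proof -
  let ?A = "A_int i t h" and ?B = "B_int i t h"
  have h0: "0 \<le> h" using h by simp
  note A = A_int_bounds[OF t h0 i] and B = B_int_bounds[OF t h0 i bb]
  have AB: "?A + ?B \<le> 1" using A(3) B(3) small_h unfolding C_def by (simp add: algebra_simps)
  define W where "W l = integral {t..t+h} (\<lambda>r. w i r l)" for l
  define Err where "Err l = x (t+h) i l - x t i l - frozen_increment i t h l" for l
  define V where "V l = x t i l + frozen_increment i t h l - W l" for l
  have Err: "enorm d Err \<le> e * h"
  proof -
    have "enorm d Err \<le> (\<Sum>l<d. \<bar>Err l\<bar>)" by (rule enorm_le_sum_abs)
    also have "\<dots> \<le> (\<Sum>l<d. 2 * \<epsilon> * C * h)"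
      unfolding Err_def C_def
      by (intro sum_mono frozen_increment_error[OF t h0 i _ \<sigma>c xe ye bb]) auto
    also have "\<dots> = real d * (2 * \<epsilon> * C) * h" by simp
    also have "\<dots> \<le> e * h" using small_eps h0 by (intro mult_right_mono)
    finally show ?thesis .
  qed
  define D where "D j = enorm d (\<lambda>l. y (t+h) j l - y t j l)" for j
  obtain jm where jm: "jm \<in> {1..k}" "\<And>j. j \<in> {1..k} \<Longrightarrow> D j \<le> D jm"
    using Max_in[of "D ` {1..k}"] Max_ge[of "D ` {1..k}"] k_pos by fastforce
  have "f i (t+h) \<le> setdist_pt d (K t) (x (t+h) i) + D jm"
    unfolding f_def K_def by (rule setdist_pt_hull_shift[OF k_pos]) (use jm in \<open>auto simp: D_def\<close>)
  also have "setdist_pt d (K t) (x (t+h) i) \<le> setdist_pt d (K t) V + enorm d (\<lambda>l. W l + Err l)"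
  proof -
    have "enorm d (\<lambda>l. x (t+h) i l - V l) = enorm d (\<lambda>l. W l + Err l)"
      unfolding V_def Err_def by (rule enorm_cong) simp
    then show ?thesis using setdist_pt_lipschitz[OF K_nonempty[of t], of d "x (t+h) i" V] by simp
  qed
  also have "enorm d (\<lambda>l. W l + Err l) \<le> enorm d W + enorm d Err" by (rule enorm_triangle)
  also have "setdist_pt d (K t) V \<le> (1 - ?A - ?B) * f i t + ?A * M t"
    unfolding V_def W_def using A(1) B(1) AB by (intro frozen_point_dist i) auto
  finally have "f i (t+h) \<le> (1 - ?A - ?B) * f i t + ?A * M t + (enorm d W + D jm) + enorm d Err"
    by simp
  moreover have "enorm d W + D jm \<le> sqrt 2 * integral {t..t+h} zn"
    using input_increment_bound[OF t _ i jm(1), of "t+h"] h0 unfolding W_def D_def by simp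
  ultimately show ?thesis
    unfolding one_step_bound_def using A(2,3) B(2,4) AB Err by (intro exI[of _ ?A] exI[of _ ?B]) auto
qed

text \<open>For every e > 0 the one-step estimate holds for all sufficiently small h > 0, by
  continuity of the states and weights and local constancy of the topology.\<close>

lemma one_step_bound_eventually:
  assumes t: "0 \<le> t" and i: "i \<in> {1..n}" and e: "0 < e"
  shows "\<forall>\<^sub>F h in at_right 0. one_step_bound i t h e"
proof -
  define bmax where "bmax j = b i j (x t) (y t) t + 1" for j
  define C where "C = real n * a_up + (\<Sum>j\<in>{1..k}. bmax j)"
  have C0: "0 \<le> C"
  proof -
    have "0 \<le> bmax j" if "j \<in> {1..k}" for j
    proof -
      have "b_low \<le> b i j (x t) (y t) t" using b_bound i that by blast
      then show ?thesis using b_low_pos unfolding bmax_def by linarith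
    qed
    then have "0 \<le> (\<Sum>j\<in>{1..k}. bmax j)" by (rule sum_nonneg)
    then show ?thesis unfolding C_def using a_up_pos by simp
  qed
  obtain \<epsilon> where \<epsilon>0: "0 < \<epsilon>" and small_eps: "real d * (2 * \<epsilon> * C) \<le> e"
    using small_factor_exists[OF C0 e] by blast
  obtain \<eta> where \<eta>: "\<eta> > 0" "\<forall>r\<in>{t..<t+\<eta>}. \<sigma> r = \<sigma> t" using sigma_locally_constant[OF t] by blast
  have T: "0 \<le> t" "t < t + 1" using t by auto
  have ev_h: "\<forall>\<^sub>F h in at_right 0. 0 < h \<and> h < \<eta> \<and> C * h \<le> 1"
    unfolding eventually_at_right_field
  proof (intro exI[of _ "min \<eta> (1 / (C + 1))"] conjI allI impI)
    show "(0::real) < min \<eta> (1 / (C + 1))" using \<eta> C0 by simp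
    fix h :: real assume h: "0 < h" "h < min \<eta> (1 / (C + 1))"
    then show "0 < h" "h < \<eta>" by auto
    have "h * (C + 1) \<le> 1" using h C0 by (simp add: field_simps)
    then show "C * h \<le> 1" using h by (simp add: algebra_simps)
  qed
  have ev_x: "\<forall>\<^sub>F h in at_right 0. \<forall>r\<in>{t..t+h}. \<forall>p\<in>{1..n} \<times> {..<d}.
      \<bar>x r (fst p) (snd p) - x t (fst p) (snd p)\<bar> \<le> \<epsilon>"
    using T \<epsilon>0 by (intro eventually_close_on_right[where T="t+1"]) (auto intro: x_continuous)
  have ev_y: "\<forall>\<^sub>F h in at_right 0. \<forall>r\<in>{t..t+h}. \<forall>p\<in>{1..k} \<times> {..<d}.
      \<bar>y r (fst p) (snd p) - y t (fst p) (snd p)\<bar> \<le> \<epsilon>"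
    using T \<epsilon>0 by (intro eventually_close_on_right[where T="t+1"]) (auto intro: y_continuous)
  have ev_b: "\<forall>\<^sub>F h in at_right 0. \<forall>r\<in>{t..t+h}. \<forall>j\<in>{1..k}.
      \<bar>b i j (x r) (y r) r - b i j (x t) (y t) t\<bar> \<le> 1"
    using T i b_cont
    by (intro eventually_close_on_right[where T="t+1"]) (auto intro: weight_along_trajectory)
  show ?thesis using ev_h ev_x ev_y ev_b
  proof eventually_elim
    case (elim h)
    show ?case
    proof (rule one_step_bound_if_small[OF t _ i, of h \<epsilon> bmax])
      show "0 < h" using elim by simp
      show "\<sigma> r = \<sigma> t" if "r \<in> {t..t+h}" for r
        by (rule \<eta>(2)[rule_format]) (use elim that in auto)
      show "\<bar>x r j l - x t j l\<bar> \<le> \<epsilon>" if "r \<in> {t..t+h}" "j \<in> {1..n}" "l < d" for r j l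
        using elim(2) that by fastforce
      show "\<bar>y r j l - y t j l\<bar> \<le> \<epsilon>" if "r \<in> {t..t+h}" "j \<in> {1..k}" "l < d" for r j l
        using elim(3) that by fastforce
      show "b i j (x r) (y r) r \<le> bmax j" if "r \<in> {t..t+h}" "j \<in> {1..k}" for r j
        using elim(4) that unfolding bmax_def by fastforce
      show "(real n * a_up + (\<Sum>j\<in>{1..k}. bmax j)) * h \<le> 1" using elim unfolding C_def by simp
      show "real d * (2 * \<epsilon> * (real n * a_up + (\<Sum>j\<in>{1..k}. bmax j))) \<le> e"
        using small_eps unfolding C_def .
    qed
  qed
qed

section \<open>Growth of the largest distance and contraction near a leader\<close>

text \<open>Since every f i (t) is at most M t, the one-step estimate bounds the growth of M.\<close>

lemma M_one_step_eventually:
  assumes t: "0 \<le> t" and e: "0 < e"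
  shows "\<forall>\<^sub>F h in at_right 0. M (t+h) \<le> M t + sqrt 2 * integral {t..t+h} zn + e * h"
proof -
  have "\<forall>\<^sub>F h in at_right 0. \<forall>i\<in>{1..n}. f i (t+h) \<le> M t + sqrt 2 * integral {t..t+h} zn + e * h"
  proof (rule eventually_ball_finite, simp, intro ballI)
    fix i assume i: "i \<in> {1..n}"
    show "\<forall>\<^sub>F h in at_right 0. f i (t+h) \<le> M t + sqrt 2 * integral {t..t+h} zn + e * h"
      using one_step_bound_eventually[OF t i e]
    proof eventually_elim
      case (elim h)
      then obtain A B where AB: "0 \<le> A" "0 \<le> B" "A + B \<le> 1"
        "f i (t+h) \<le> (1 - A - B) * f i t + A * M t + sqrt 2 * integral {t..t+h} zn + e * h"
        unfolding one_step_bound_def by blast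
      have "(1 - A - B) * f i t \<le> (1 - A - B) * M t" using AB f_le_M[OF i] by (intro mult_left_mono) auto
      moreover have "0 \<le> B * M t" using AB M_nonneg by simp
      ultimately show ?case using AB(4) by (simp add: algebra_simps)
    qed
  qed
  then show ?thesis
    by eventually_elim (use n_pos in \<open>auto simp: M_eq_Max[of "t+_"]\<close>)
qed

lemma M_growth:
  assumes t0: "0 \<le> t0" and T: "t0 \<le> T"
  shows "M T \<le> M t0 + sqrt 2 * integral {t0..T} zn"
proof -
  define \<Phi> where "\<Phi> s = M s - sqrt 2 * integral {t0..s} zn" for s
  have "\<Phi> T \<le> \<Phi> t0"
  proof (rule right_dini_nonincreasing[OF T])
    have "continuous_on {t0..T} M" by (rule continuous_on_subset[OF M_continuous[of T]]) (use t0 T in auto)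
    then show "continuous_on {t0..T} \<Phi>"
      unfolding \<Phi>_def by (intro continuous_intros zn_integral_continuous t0 T)
    fix t e :: real assume t: "t \<in> {t0..<T}" and e: "0 < e"
    have t': "0 \<le> t" "t0 \<le> t" using t t0 by auto
    have "\<forall>\<^sub>F h in at_right (0::real). 0 < h" by (rule eventually_at_right_less)
    with M_one_step_eventually[OF t'(1) e]
    show "\<forall>\<^sub>F h in at_right 0. \<Phi> (t+h) \<le> \<Phi> t + e*h"
    proof eventually_elim
      case (elim h)
      have "integral {t0..t+h} zn = integral {t0..t} zn + integral {t..t+h} zn"
        using t' t0 elim by (intro zn_integral_split) auto
      then show ?case using elim(1) unfolding \<Phi>_def by (simp add: algebra_simps)
    qed
  qed
  then show ?thesis unfolding \<Phi>_def by simp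
qed

abbreviation \<kappa> where "\<kappa> \<equiv> contraction_rate n a_up b_low tauD"

lemma \<kappa>_props: "0 < \<kappa>" "0 \<le> s \<Longrightarrow> s \<le> tauD \<Longrightarrow> \<kappa> * (1 + (b_low + real n * a_up) * s) \<le> b_low"
  using contraction_rate_props a_up_pos b_low_pos tauD_pos by auto

lemma contraction_step_eventually:
  assumes t: "0 \<le> t" and i: "i \<in> {1..n}" and j: "j \<in> {1..k}" and arc: "(Inr j, Inl i) \<in> \<sigma> t"
    and s: "0 \<le> s" "s \<le> tauD" and Mt: "M t \<le> Mb" and above: "(1 - \<kappa> * s) * Mb \<le> f i t"
    and e: "0 < e"
  shows "\<forall>\<^sub>F h in at_right 0. f i (t+h) \<le> f i t - \<kappa> * h * Mb + sqrt 2 * integral {t..t+h} zn + e * h"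
proof -
  have "\<forall>\<^sub>F h in at_right (0::real). 0 < h" by (rule eventually_at_right_less)
  with one_step_bound_eventually[OF t i e] show ?thesis
  proof eventually_elim
    case (elim h)
    then obtain A B where AB: "0 \<le> A" "A \<le> real n * a_up * h" "0 \<le> B"
      "\<forall>j\<in>{1..k}. (Inr j, Inl i) \<in> \<sigma> t \<longrightarrow> b_low * h \<le> B"
      "f i (t+h) \<le> (1 - A - B) * f i t + A * M t + sqrt 2 * integral {t..t+h} zn + e * h"
      unfolding one_step_bound_def by blast
    have "b_low * h \<le> B" using AB(4) j arc by blast
    then have "A * (M t - f i t) - B * f i t + \<kappa> * h * Mb \<le> 0"
      using AB f_nonneg Mt M_nonneg[of t] elim b_low_pos a_up_pos \<kappa>_props above s
      by (intro contraction_step_arith[where c="real n * a_up" and b=b_low and s=s]) auto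
    then show ?case using AB(5) by (simp add: algebra_simps)
  qed
qed

text \<open>Bound (2): while the arc (j,i) is present, f_i stays below the line
  (1 - kappa (s - t0)) Mb + sqrt 2 int zn, where Mb = M t0 + sqrt 2 int zn bounds M on the
  window by (1). Above that line the one-step estimate forces a decrease.\<close>

lemma follower_contraction:
  assumes t0: "0 \<le> t0" and i: "i \<in> {1..n}" and j: "j \<in> {1..k}"
    and edge: "\<forall>t\<in>{t0..<t0 + tauD}. (Inr j, Inl i) \<in> \<sigma> t"
    and T: "T \<in> {t0..t0 + tauD}"
  shows "f i T \<le> (1 - \<kappa> * (T - t0)) * M t0 + 2 * sqrt 2 * integral {t0..t0+tauD} zn"
proof -
  define Z where "Z = integral {t0..t0+tauD} zn"
  define Mb where "Mb = M t0 + sqrt 2 * Z"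
  have Z0: "0 \<le> Z" unfolding Z_def using t0 tauD_pos by (intro zn_integral_nonneg) auto
  have GZ: "0 \<le> integral {t0..s} zn \<and> integral {t0..s} zn \<le> Z" if "t0 \<le> s" "s \<le> t0 + tauD" for s
    using zn_integral_split[of t0 s "t0+tauD"] zn_integral_nonneg[of s "t0+tauD"]
      zn_integral_nonneg[of t0 s] that t0 unfolding Z_def by simp
  have T': "t0 \<le> T" "T \<le> t0 + tauD" using T by auto
  define \<Phi> where "\<Phi> s = f i s - (1 - \<kappa> * (s - t0)) * Mb - sqrt 2 * integral {t0..s} zn" for s
  have "\<Phi> T \<le> 0"
  proof (rule right_dini_stays_nonpositive[OF T'(1)])
    have "continuous_on {t0..T} (f i)"
      by (rule continuous_on_subset[OF f_continuous[OF _ i, of T]]) (use t0 T' in auto)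
    then show "continuous_on {t0..T} \<Phi>"
      unfolding \<Phi>_def by (intro continuous_intros zn_integral_continuous t0 T'(1))
    have "0 \<le> sqrt 2 * Z" using Z0 by simp
    then show "\<Phi> t0 \<le> 0" unfolding \<Phi>_def Mb_def using f_le_M[OF i, of t0] by simp
    fix t e :: real assume t: "t \<in> {t0..<T}" and \<Phi>t: "0 \<le> \<Phi> t" and e: "0 < e"
    have t': "0 \<le> t" "t0 \<le> t" "t < t0 + tauD" using t t0 T' by auto
    have Mt: "M t \<le> Mb"
      using M_growth[OF t0 t'(2)] GZ[of t] t' unfolding Mb_def by (smt (verit) real_sqrt_ge_zero mult_left_mono)
    have f_above: "(1 - \<kappa> * (t - t0)) * Mb \<le> f i t"
      using \<Phi>t GZ[of t] t' unfolding \<Phi>_def by (smt (verit) real_sqrt_ge_zero mult_nonneg_nonneg)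
    have "(Inr j, Inl i) \<in> \<sigma> t" "0 \<le> t - t0" "t - t0 \<le> tauD" using edge t' by auto
    then have step: "\<forall>\<^sub>F h in at_right 0.
        f i (t+h) \<le> f i t - \<kappa> * h * Mb + sqrt 2 * integral {t..t+h} zn + e * h"
      using contraction_step_eventually[OF t'(1) i j _ _ _ Mt f_above e] by blast
    have "\<forall>\<^sub>F h in at_right (0::real). 0 < h" by (rule eventually_at_right_less)
    with step show "\<forall>\<^sub>F h in at_right 0. \<Phi> (t+h) \<le> \<Phi> t + e*h"
    proof eventually_elim
      case (elim h)
      have "integral {t0..t+h} zn = integral {t0..t} zn + integral {t..t+h} zn"
        using t' t0 elim(2) by (intro zn_integral_split) auto
      then show ?case using elim(1) unfolding \<Phi>_def by (simp add: algebra_simps)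
    qed
  qed
  then have "f i T \<le> (1 - \<kappa> * (T - t0)) * Mb + sqrt 2 * integral {t0..T} zn" unfolding \<Phi>_def by simp
  moreover have "(1 - \<kappa> * (T - t0)) * (sqrt 2 * Z) \<le> sqrt 2 * Z"
  proof -
    have "0 \<le> \<kappa> * (T - t0)" using \<kappa>_props(1) T' by simp
    then have "0 \<le> \<kappa> * (T - t0) * (sqrt 2 * Z)" using Z0 by simp
    then show ?thesis by (simp add: algebra_simps)
  qed
  moreover have "sqrt 2 * integral {t0..T} zn \<le> sqrt 2 * Z"
    using GZ[OF T'] by (intro mult_left_mono) auto
  moreover have "2 * sqrt 2 * Z = sqrt 2 * Z + sqrt 2 * Z" by simp
  ultimately show ?thesis unfolding Mb_def Z_def[symmetric] distrib_left by linarith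
qed

lemma leader_contraction:
  assumes "0 \<le> t0" "i \<in> {1..n}" "j \<in> {1..k}" "\<forall>t\<in>{t0..<t0 + tauD}. (Inr j, Inl i) \<in> \<sigma> t"
    "t \<in> {t0..t0 + tauD}"
  shows "setdist_pt d (leader_hull d k (y t)) (x t i)
    \<le> (1 - \<kappa> * (t - t0)) * max_dist d n k (x t0) (y t0)
      + 2 * sqrt 2 * integral {t0..t0 + tauD} (znorm d n k u w y)"
  using follower_contraction[OF assms] unfolding f_def K_def M_def zn_def .

end

theorem lemma9:
  fixes n :: nat and tauD a_up b_low :: real
  assumes "n \<ge> 2" and "tauD > 0" and "a_up > 0" and "b_low > 0"
  shows "\<exists>\<delta> :: real \<Rightarrow> real.
     (\<forall>s t. 0 \<le> s \<longrightarrow> s < t \<longrightarrow> t \<le> tauD \<longrightarrow> \<delta> t < \<delta> s) \<and>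
     (\<forall>t\<in>{0..tauD}. 0 < \<delta> t \<and> \<delta> t \<le> 1) \<and> \<delta> 0 = 1 \<and>
     (\<forall>(k::nat) (d::nat) (a_low::real) P \<sigma> a b u w x y t0 i j.
        k \<ge> 1 \<longrightarrow> d \<ge> 1 \<longrightarrow> 0 < a_low \<longrightarrow> a_low \<le> a_up \<longrightarrow>
        finite P \<longrightarrow> (\<forall>E\<in>P. admissible_graph n k E) \<longrightarrow>
        dwell_switching tauD P \<sigma> \<longrightarrow>
        (\<forall>i'\<in>{1..n}. \<forall>j'\<in>{1..n}. \<forall>xs ys t.
            a_low \<le> a i' j' xs ys t \<and> a i' j' xs ys t \<le> a_up) \<longrightarrow>
        (\<forall>i'\<in>{1..n}. \<forall>j'\<in>{1..k}. \<forall>xs ys t. b_low \<le> b i' j' xs ys t) \<longrightarrow>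
        (\<forall>i'\<in>{1..n}. \<forall>j'\<in>{1..n}. weight_cont d n k (a i' j')) \<longrightarrow>
        (\<forall>i'\<in>{1..n}. \<forall>j'\<in>{1..k}. weight_cont d n k (b i' j')) \<longrightarrow>
        (\<forall>i'\<in>{1..k}. \<forall>t. input_cont_y d k (\<lambda>ys. u i' ys t)) \<longrightarrow>
        (\<forall>i'\<in>{1..k}. \<forall>ys. pw_cont d (\<lambda>t. u i' ys t)) \<longrightarrow>
        (\<forall>i'\<in>{1..n}. \<forall>l<d. continuous_on {0..} (\<lambda>t. w i' t l)) \<longrightarrow>
        trajectory d n k \<sigma> a b u w x y \<longrightarrow>
        t0 \<ge> 0 \<longrightarrow> i \<in> {1..n} \<longrightarrow> j \<in> {1..k} \<longrightarrow>
        (\<forall>t\<in>{t0..<t0 + tauD}. (Inr j, Inl i) \<in> \<sigma> t) \<longrightarrow>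
        (\<forall>t\<in>{t0..t0 + tauD}.
           setdist_pt d (leader_hull d k (y t)) (x t i)
             \<le> \<delta> (t - t0) * max_dist d n k (x t0) (y t0)
               + 2 * sqrt 2 * integral {t0..t0 + tauD} (znorm d n k u w y)))"
proof -
  let ?\<kappa> = "contraction_rate n a_up b_low tauD"
  have \<kappa>: "0 < ?\<kappa>" "?\<kappa> * tauD < 1" using contraction_rate_props assms by auto
  show ?thesis
  proof (intro exI[of _ "\<lambda>s. 1 - ?\<kappa> * s"] conjI allI impI ballI, goal_cases)
    case (1 s t)
    then show ?case using \<kappa>(1) by simp
  next
    case (2 t)
    then have "?\<kappa> * t \<le> ?\<kappa> * tauD" using \<kappa>(1) by (intro mult_left_mono) auto
    then show ?case using \<kappa>(2) by simp
  next
    case (3 t)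
    then show ?case using \<kappa>(1) by simp
  next
    case 4
    then show ?case by simp
  next
    case (5 k d a_low P \<sigma> a b u w x y t0 i j t)
    interpret trajectory_setting n k d tauD a_low a_up b_low P \<sigma> a b u w x y
      by unfold_locales (use 5 assms in auto)
    show ?case by (rule leader_contraction) (use 5 in auto)
  qed
qed

end
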